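(* Let $m_1,m_2,n_1,n_2\in\mathbb{N}$ and let $U$ ($m_1\times n_2$), $\bar U$ ($m_2\times n_1$), $V$ ($n_1\times m_1$), $\bar V$ ($n_2\times m_2$), $S$ ($n_1\times n_1$), $\bar S$ ($n_2\times n_2$), $K$ ($n_1\times n_2$), $\bar K$ ($n_2\times n_1$) be constant complex matrices, $S,\bar S$ invertible in the discrete cases. Assume: (i) continuous: $SK+K\bar S=VU$, $\bar S\bar K+\bar KS=\bar V\bar U$, $\Xi=e^{-xS-\mathrm{i}tS^2}$, $\bar\Xi=e^{-x\bar S+\mathrm{i}t\bar S^2}$, $x,t\in\mathbb{R}$; (ii) semi-discrete: $S^{-1}K-K\bar S=VU$, $\bar S^{-1}\bar K-\bar KS=\bar V\bar U$, $\Xi=S^xe^{-\mathrm{i}t\omega(S)}$, $\bar\Xi=\bar S^xe^{\mathrm{i}t\omega(\bar S)}$, $x\in\mathbb{Z},t\in\mathbb{R}$; (iii) fully discrete: the same Sylvester equations as (ii), $\Xi=S^x\Omega(S)^t$, $\bar\Xi=\bar S^x\bar\Omega(\bar S)^t$, $x,t\in\mathbb{Z}$; where $\omega(S)=S+S^{-1}-2I$, $\Omega(S)=[I+\mathrm{i}(I-S^{-1})][I-\mathrm{i}(I-S)]^{-1}$, $\bar\Omega(\bar S)=[I-\mathrm{i}(I-\bar S^{-1})][I+\mathrm{i}(I-\bar S)]^{-1}$. Then (wherever the inverses exist) $$q=U(\bar\Xi^{-1}-\bar K\Xi K)^{-1}\bar V,\quad \bar q=\bar U(\Xi^{-1}-K\bar\Xi\bar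 K)^{-1}V,$$ $$p=U\bar\Xi\bar K(\Xi^{-1}-K\bar\Xi\bar K)^{-1}V,\quad \bar p=\bar U\Xi K(\bar\Xi^{-1}-\bar K\Xi K)^{-1}\bar V$$ solve the respective (continuous, semi-discrete, fully discrete) NLS system.
   Context: For matrices $q$ ($m_1\times m_2$), $\bar q$ ($m_2\times m_1$), $p$ ($m_1\times m_1$), $\bar p$ ($m_2\times m_2$): continuous NLS system: $\mathrm{i}q_t+q_{xx}-2q\bar qq=0$, $-\mathrm{i}\bar q_t+\bar q_{xx}-2\bar qq\bar q=0$, $p_x=-q\bar q$, $\bar p_x=-\bar qq$. With $f^\pm(x,t)=f(x\pm1,t)$, $f_\pm(x,t)=f(x,t\pm1)$, $\dot f=\partial_tf$: semi-discrete (Ablowitz–Ladik) system: $\mathrm{i}\dot q+q^+-2q+q^--q^+\bar qq-q\bar qq^-=0$, $-\mathrm{i}\dot{\bar q}+\bar q^+-2\bar q+\bar q^--\bar q^+q\bar q-\bar qq\bar q^-=0$, $p^+-p=-q^+\bar q$, $\bar p^+-\bar p=-\bar q^+q$. Fully discrete system: $p^+-p=-q^+\bar q$, $\bar p^+-\bar p=-\bar q^+q$ and $\mathrm{i}(q_+-q)+(q^+-q)_+-(q-q^-)-(q^+\bar qq)_+-q\bar qq^-+(p_+-p)q_++q(\bar p_+-\bar p)=0$, $-\mathrm{i}(\bar q_+-\bar q)+(\bar q^+-\bar q)_+-(\bar q-\bar q^-)-(\bar q^+q\bar q)_+-\bar qq\bar q^-+(\bar p_+-\bar p)\bar q_++\bar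 q(p_+-p)=0$. *)

theory Defs
  imports "HOL-Analysis.Analysis"
begin

text \<open>Matrices are elements of \<open>complex^'c^'r\<close> (rows indexed by \<open>'r\<close>, columns by \<open>'c\<close>),
  with matrix product \<open>**\<close>, identity \<open>mat 1\<close>, \<open>invertible\<close> and \<open>matrix_inv\<close> from HOL-Analysis.\<close>

definition cscale :: "complex \<Rightarrow> complex^'c^'r \<Rightarrow> complex^'c^'r" where
  "cscale c A = (\<chi> i j. c * A$i$j)"

primrec mpow :: "complex^'n^'n \<Rightarrow> nat \<Rightarrow> complex^'n^'n" where
  "mpow A 0 = mat 1"
| "mpow A (Suc k) = A ** mpow A k"

definition mpowi :: "complex^'n^'n \<Rightarrow> int \<Rightarrow> complex^'n^'n" where
  "mpowi A k = (if 0 \<le> k then mpow A (nat k) else mpow (matrix_inv A) (nat (- k)))"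

definition mexp :: "complex^'n^'n \<Rightarrow> complex^'n^'n" where
  "mexp A = (\<chi> i j. \<Sum>k. (mpow A k)$i$j / of_nat (fact k))"

definition omega :: "complex^'n^'n \<Rightarrow> complex^'n^'n" where
  "omega S = S + matrix_inv S - cscale 2 (mat 1)"

definition Omega :: "complex^'n^'n \<Rightarrow> complex^'n^'n" where
  "Omega S = (mat 1 + cscale \<i> (mat 1 - matrix_inv S)) ** matrix_inv (mat 1 - cscale \<i> (mat 1 - S))"

definition Omegabar :: "complex^'n^'n \<Rightarrow> complex^'n^'n" where
  "Omegabar S = (mat 1 - cscale \<i> (mat 1 - matrix_inv S)) ** matrix_inv (mat 1 + cscale \<i> (mat 1 - S))"

subsection \<open>The phase matrices \<open>\<Xi>\<close>, \<open>\<Xi>bar\<close> in the three cases\<close>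

definition XiC :: "complex^'n^'n \<Rightarrow> real \<Rightarrow> real \<Rightarrow> complex^'n^'n" where
  "XiC S x t = mexp (- cscale (complex_of_real x) S - cscale (\<i> * complex_of_real t) (S ** S))"

definition XibC :: "complex^'n^'n \<Rightarrow> real \<Rightarrow> real \<Rightarrow> complex^'n^'n" where
  "XibC Sb x t = mexp (- cscale (complex_of_real x) Sb + cscale (\<i> * complex_of_real t) (Sb ** Sb))"

definition XiS :: "complex^'n^'n \<Rightarrow> int \<Rightarrow> real \<Rightarrow> complex^'n^'n" where
  "XiS S x t = mpowi S x ** mexp (- cscale (\<i> * complex_of_real t) (omega S))"

definition XibS :: "complex^'n^'n \<Rightarrow> int \<Rightarrow> real \<Rightarrow> complex^'n^'n" where
  "XibS Sb x t = mpowi Sb x ** mexp (cscale (\<i> * complex_of_real t) (omega Sb))"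

definition XiF :: "complex^'n^'n \<Rightarrow> int \<Rightarrow> int \<Rightarrow> complex^'n^'n" where
  "XiF S x t = mpowi S x ** mpowi (Omega S) t"

definition XibF :: "complex^'n^'n \<Rightarrow> int \<Rightarrow> int \<Rightarrow> complex^'n^'n" where
  "XibF Sb x t = mpowi Sb x ** mpowi (Omegabar Sb) t"

definition qsol ::
  "complex^'n2^'m1 \<Rightarrow> complex^'m2^'n2 \<Rightarrow> complex^'n2^'n1 \<Rightarrow> complex^'n1^'n2
   \<Rightarrow> complex^'n1^'n1 \<Rightarrow> complex^'n2^'n2 \<Rightarrow> complex^'m2^'m1" where
  "qsol U Vb K Kb Xi Xib = U ** matrix_inv (matrix_inv Xib - Kb ** Xi ** K) ** Vb"

definition qbsol ::
  "complex^'n1^'m2 \<Rightarrow> complex^'m1^'n1 \<Rightarrow> complex^'n2^'n1 \<Rightarrow> complex^'n1^'n2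
   \<Rightarrow> complex^'n1^'n1 \<Rightarrow> complex^'n2^'n2 \<Rightarrow> complex^'m1^'m2" where
  "qbsol Ub V K Kb Xi Xib = Ub ** matrix_inv (matrix_inv Xi - K ** Xib ** Kb) ** V"

definition psol ::
  "complex^'n2^'m1 \<Rightarrow> complex^'m1^'n1 \<Rightarrow> complex^'n2^'n1 \<Rightarrow> complex^'n1^'n2
   \<Rightarrow> complex^'n1^'n1 \<Rightarrow> complex^'n2^'n2 \<Rightarrow> complex^'m1^'m1" where
  "psol U V K Kb Xi Xib = U ** Xib ** Kb ** matrix_inv (matrix_inv Xi - K ** Xib ** Kb) ** V"

definition pbsol ::
  "complex^'n1^'m2 \<Rightarrow> complex^'m2^'n2 \<Rightarrow> complex^'n2^'n1 \<Rightarrow> complex^'n1^'n2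
   \<Rightarrow> complex^'n1^'n1 \<Rightarrow> complex^'n2^'n2 \<Rightarrow> complex^'m2^'m2" where
  "pbsol Ub Vb K Kb Xi Xib = Ub ** Xi ** K ** matrix_inv (matrix_inv Xib - Kb ** Xi ** K) ** Vb"

text \<open>"The inverses exist" at a given point.\<close>
definition regular ::
  "complex^'n2^'n1 \<Rightarrow> complex^'n1^'n2 \<Rightarrow> complex^'n1^'n1 \<Rightarrow> complex^'n2^'n2 \<Rightarrow> bool" where
  "regular K Kb Xi Xib \<longleftrightarrow> invertible Xi \<and> invertible Xib \<and>
     invertible (matrix_inv Xib - Kb ** Xi ** K) \<and> invertible (matrix_inv Xi - K ** Xib ** Kb)"

definition dx :: "(real \<Rightarrow> real \<Rightarrow> 'a::real_normed_vector) \<Rightarrow> real \<Rightarrow> real \<Rightarrow> 'a" where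
  "dx f x t = vector_derivative (\<lambda>y. f y t) (at x)"

definition dt :: "('b \<Rightarrow> real \<Rightarrow> 'a::real_normed_vector) \<Rightarrow> 'b \<Rightarrow> real \<Rightarrow> 'a" where
  "dt f x t = vector_derivative (\<lambda>s. f x s) (at t)"

definition NLS_cont_at ::
  "(real \<Rightarrow> real \<Rightarrow> complex^'m2^'m1) \<Rightarrow> (real \<Rightarrow> real \<Rightarrow> complex^'m1^'m2)
   \<Rightarrow> (real \<Rightarrow> real \<Rightarrow> complex^'m1^'m1) \<Rightarrow> (real \<Rightarrow> real \<Rightarrow> complex^'m2^'m2)
   \<Rightarrow> real \<Rightarrow> real \<Rightarrow> bool" where
  "NLS_cont_at q qb p pb x t \<longleftrightarrow>
     (\<lambda>y. q y t) differentiable (at x) \<and> (\<lambda>y. dx q y t) differentiable (at x) \<and>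
     (\<lambda>s. q x s) differentiable (at t) \<and>
     (\<lambda>y. qb y t) differentiable (at x) \<and> (\<lambda>y. dx qb y t) differentiable (at x) \<and>
     (\<lambda>s. qb x s) differentiable (at t) \<and>
     (\<lambda>y. p y t) differentiable (at x) \<and> (\<lambda>y. pb y t) differentiable (at x) \<and>
     cscale \<i> (dt q x t) + dx (dx q) x t - cscale 2 (q x t ** qb x t ** q x t) = 0 \<and>
     - cscale \<i> (dt qb x t) + dx (dx qb) x t - cscale 2 (qb x t ** q x t ** qb x t) = 0 \<and>
     dx p x t = - (q x t ** qb x t) \<and>
     dx pb x t = - (qb x t ** q x t)"

definition NLS_semi_at ::
  "(int \<Rightarrow> real \<Rightarrow> complex^'m2^'m1) \<Rightarrow> (int \<Rightarrow> real \<Rightarrow> complex^'m1^'m2)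
   \<Rightarrow> (int \<Rightarrow> real \<Rightarrow> complex^'m1^'m1) \<Rightarrow> (int \<Rightarrow> real \<Rightarrow> complex^'m2^'m2)
   \<Rightarrow> int \<Rightarrow> real \<Rightarrow> bool" where
  "NLS_semi_at q qb p pb x t \<longleftrightarrow>
     (\<lambda>s. q x s) differentiable (at t) \<and> (\<lambda>s. qb x s) differentiable (at t) \<and>
     cscale \<i> (dt q x t) + q (x+1) t - cscale 2 (q x t) + q (x-1) t
       - q (x+1) t ** qb x t ** q x t - q x t ** qb x t ** q (x-1) t = 0 \<and>
     - cscale \<i> (dt qb x t) + qb (x+1) t - cscale 2 (qb x t) + qb (x-1) t
       - qb (x+1) t ** q x t ** qb x t - qb x t ** q x t ** qb (x-1) t = 0 \<and>
     p (x+1) t - p x t = - (q (x+1) t ** qb x t) \<and>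
     pb (x+1) t - pb x t = - (qb (x+1) t ** q x t)"

definition NLS_full_at ::
  "(int \<Rightarrow> int \<Rightarrow> complex^'m2^'m1) \<Rightarrow> (int \<Rightarrow> int \<Rightarrow> complex^'m1^'m2)
   \<Rightarrow> (int \<Rightarrow> int \<Rightarrow> complex^'m1^'m1) \<Rightarrow> (int \<Rightarrow> int \<Rightarrow> complex^'m2^'m2)
   \<Rightarrow> int \<Rightarrow> int \<Rightarrow> bool" where
  "NLS_full_at q qb p pb x t \<longleftrightarrow>
     p (x+1) t - p x t = - (q (x+1) t ** qb x t) \<and>
     pb (x+1) t - pb x t = - (qb (x+1) t ** q x t) \<and>
     cscale \<i> (q x (t+1) - q x t) + (q (x+1) (t+1) - q x (t+1)) - (q x t - q (x-1) t)
       - q (x+1) (t+1) ** qb x (t+1) ** q x (t+1) - q x t ** qb x t ** q (x-1) t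
       + (p x (t+1) - p x t) ** q x (t+1) + q x t ** (pb x (t+1) - pb x t) = 0 \<and>
     - cscale \<i> (qb x (t+1) - qb x t) + (qb (x+1) (t+1) - qb x (t+1)) - (qb x t - qb (x-1) t)
       - qb (x+1) (t+1) ** q x (t+1) ** qb x (t+1) - qb x t ** q x t ** qb (x-1) t
       + (pb x (t+1) - pb x t) ** qb x (t+1) + qb x t ** (p x (t+1) - p x t) = 0"

end

theory Submission
  imports Defs
begin

(* The solution formulas depend on the phase matrices Xi, Xib only through the two
   "resolvent" matrices  M = Xib^-1 - Kb Xi K  and  N = Xi^-1 - K Xib Kb.  Each of the three
   NLS systems therefore reduces to algebraic identities between M, N, their inverses and the
   data, which only use (a) the Sylvester equations, (b) that Xi commutes with S (Xib with Sb),
   and (c) how Xi changes: a space step multiplies by S, a discrete time step by Omega(S), and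
   in the continuous cases the derivatives are -S Xi, -i S^2 Xi, -i omega(S) Xi, etc.
   The file is organised accordingly:
   1. elementary algebra of complex matrices (scaling, inverses, commuting matrices);
   2. the matrix exponential, obtained by transporting the exponential of the Banach algebra
      of linear operators on complex^'n to matrices;
   3. calculus of matrix-valued functions (product rule, derivative of the inverse);
   4. the properties (a)-(c) of the concrete phase matrices XiC, XiS, XiF and their bars;
   5. the algebraic identities, stated in locales over an abstract Xi, Xib at one point,
      at two neighbouring points, or for derivatives;
   6. locales for families Xi(x,t) with properties (a)-(c), proving the equations for q and p;
   7. the equations for qb and pb are the same statements for the swapped data
      (U,V,S,K,Xi,i) <-> (Ub,Vb,Sb,Kb,Xib,-i); this gives the three cases and the theorem. *)

section \<open>Algebra of complex matrices\<close>

lemma matrix_add_rdistrib: "(A + B) ** C = A ** C + B ** (C::'a::semiring_1^_^_)"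
  by (vector matrix_matrix_mult_def sum.distrib[symmetric] field_simps)
lemma matrix_diff_ldistrib: "(A::'a::ring_1^_^_) ** (B - C) = A ** B - A ** C"
  by (vector matrix_matrix_mult_def sum_subtractf[symmetric] field_simps)
lemma matrix_diff_rdistrib: "((A::'a::ring_1^_^_) - B) ** C = A ** C - B ** C"
  by (vector matrix_matrix_mult_def sum_subtractf[symmetric] field_simps)
lemma matrix_neg_left: "(- (A::'a::ring_1^_^_)) ** B = - (A ** B)"
  by (vector matrix_matrix_mult_def sum_negf[symmetric])
lemma matrix_neg_right: "(A::'a::ring_1^_^_) ** (- B) = - (A ** B)"
  by (vector matrix_matrix_mult_def sum_negf[symmetric])

lemma cscale_mult_left: "cscale c A ** B = cscale c (A ** B)"
  by (simp add: cscale_def matrix_matrix_mult_def vec_eq_iff sum_distrib_left mult_ac)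
lemma cscale_mult_right: "A ** cscale c B = cscale c (A ** B)"
  by (simp add: cscale_def matrix_matrix_mult_def vec_eq_iff sum_distrib_left mult_ac)
lemma cscale_add: "cscale c (A + B) = cscale c A + cscale c B"
  by (simp add: cscale_def vec_eq_iff distrib_left)
lemma cscale_diff: "cscale c (A - B) = cscale c A - cscale c B"
  by (simp add: cscale_def vec_eq_iff right_diff_distrib)
lemma cscale_minus: "cscale c (- A) = - cscale c A"
  by (simp add: cscale_def vec_eq_iff)
lemma cscale_cscale: "cscale c (cscale d A) = cscale (c * d) A"
  by (simp add: cscale_def vec_eq_iff mult.assoc)
lemma cscale_one [simp]: "cscale 1 A = A"
  by (simp add: cscale_def vec_eq_iff)
lemma cscale_zero [simp]: "cscale c 0 = 0"
  by (simp add: cscale_def vec_eq_iff)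
lemma cscale_add_scalar: "cscale (c + d) A = cscale c A + cscale d A"
  by (simp add: cscale_def vec_eq_iff distrib_right)
lemma cscale_diff_scalar: "cscale (c - d) A = cscale c A - cscale d A"
  by (simp add: cscale_def vec_eq_iff left_diff_distrib)
lemma cscale_minus_scalar: "cscale (- c) A = - cscale c A"
  by (simp add: cscale_def vec_eq_iff)
lemma cscale_two: "cscale 2 A = 2 * A"
  by (simp add: cscale_def vec_eq_iff)

lemma cscale_of_real: "cscale (complex_of_real r) A = r *\<^sub>R A"
  by (simp add: cscale_def vec_eq_iff) (simp add: scaleR_conv_of_real)
lemma cscale_mult_of_real: "cscale (c * complex_of_real t) A = t *\<^sub>R cscale c A"
  by (simp add: cscale_def vec_eq_iff) (simp add: scaleR_conv_of_real)
lemma cscale_scaleR: "cscale c (r *\<^sub>R A) = r *\<^sub>R cscale c A"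
  by (simp add: cscale_def vec_eq_iff)

lemmas matrix_ring_simps = matrix_mul_assoc matrix_add_ldistrib matrix_add_rdistrib
  matrix_diff_ldistrib matrix_diff_rdistrib matrix_neg_left matrix_neg_right
  cscale_mult_left cscale_mult_right cscale_add cscale_diff cscale_minus cscale_cscale

lemmas cscale_scalar_simps = cscale_add_scalar cscale_diff_scalar cscale_minus_scalar

lemma square_eq_minus_one: "e * e = (-1::complex) \<Longrightarrow> e * (e * c) = - c"
  by (simp add: mult.assoc[symmetric])

lemma matrix_inv_right: "invertible A \<Longrightarrow> A ** matrix_inv A = mat 1"
  unfolding invertible_def matrix_inv_def by (rule someI_ex[THEN conjunct1])
lemma matrix_inv_left: "invertible A \<Longrightarrow> matrix_inv A ** A = mat 1"
  unfolding invertible_def matrix_inv_def by (rule someI_ex[THEN conjunct2])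

lemma cancel_inverse: "A ** B = mat 1 \<Longrightarrow> C ** A ** B = C"
  by (metis matrix_mul_assoc matrix_mul_rid)

lemma matrix_inv_cancel_right: "invertible A \<Longrightarrow> C ** A ** matrix_inv A = C"
  by (rule cancel_inverse[OF matrix_inv_right])
lemma matrix_inv_cancel_left: "invertible A \<Longrightarrow> C ** matrix_inv A ** A = C"
  by (rule cancel_inverse[OF matrix_inv_left])

lemma matrix_inv_unique:
  fixes A :: "'a::semiring_1^'n^'n"
  assumes "A ** B = mat 1" "B ** A = mat 1" shows "matrix_inv A = B"
proof -
  have i: "invertible A" using assms invertible_def by blast
  have "matrix_inv A = matrix_inv A ** (A ** B)" by (simp add: assms)
  also have "\<dots> = B" by (simp add: matrix_mul_assoc matrix_inv_left i)
  finally show ?thesis .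
qed

lemma invertible_matrix_inv: "invertible A \<Longrightarrow> invertible (matrix_inv A)"
  using matrix_inv_left matrix_inv_right invertible_def by blast

lemma matrix_inv_inv: "invertible (A::'a::semiring_1^'n^'n) \<Longrightarrow> matrix_inv (matrix_inv A) = A"
  by (rule matrix_inv_unique) (simp_all add: matrix_inv_left matrix_inv_right)

lemma matrix_inv_mult:
  fixes A B :: "'a::semiring_1^'n^'n"
  assumes "invertible A" "invertible B"
  shows "matrix_inv (A ** B) = matrix_inv B ** matrix_inv A"
proof (rule matrix_inv_unique)
  show "A ** B ** (matrix_inv B ** matrix_inv A) = mat 1"
    by (simp only: matrix_mul_assoc matrix_inv_cancel_right[OF assms(2)] matrix_inv_right[OF assms(1)])
  show "matrix_inv B ** matrix_inv A ** (A ** B) = mat 1"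
    by (simp only: matrix_mul_assoc matrix_inv_cancel_left[OF assms(1)] matrix_inv_left[OF assms(2)])
qed

lemma matrix_inv_commute:
  fixes A B :: "'a::semiring_1^'n^'n"
  assumes "invertible A" "A ** B = B ** A"
  shows "matrix_inv A ** B = B ** matrix_inv A"
proof -
  have "matrix_inv A ** B = matrix_inv A ** (B ** (A ** matrix_inv A))"
    by (simp add: matrix_inv_right assms)
  also have "\<dots> = matrix_inv A ** ((A ** B) ** matrix_inv A)" by (simp only: matrix_mul_assoc assms)
  also have "\<dots> = (matrix_inv A ** A) ** (B ** matrix_inv A)" by (simp only: matrix_mul_assoc)
  also have "\<dots> = B ** matrix_inv A" by (simp add: matrix_inv_left assms)
  finally show ?thesis .
qed

lemma commute_with_inverses:
  fixes S X :: "'a::semiring_1^'n^'n"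
  assumes "invertible S" "invertible X" "S ** X = X ** S"
  shows "S ** X = X ** S" "matrix_inv S ** X = X ** matrix_inv S"
    "S ** matrix_inv X = matrix_inv X ** S"
    "matrix_inv S ** matrix_inv X = matrix_inv X ** matrix_inv S"
proof -
  show "S ** X = X ** S" by fact
  show 2: "matrix_inv S ** X = X ** matrix_inv S" using matrix_inv_commute assms by metis
  show "S ** matrix_inv X = matrix_inv X ** S" using matrix_inv_commute[of X S] assms by metis
  show "matrix_inv S ** matrix_inv X = matrix_inv X ** matrix_inv S"
    using matrix_inv_commute[of X "matrix_inv S"] 2 assms by metis
qed

lemma commute_in_product: "A ** B = B ** A \<Longrightarrow> C ** A ** B = C ** B ** A"
  by (metis matrix_mul_assoc)

lemma commute_with_inverses_in_product:
  fixes S X :: "'a::semiring_1^'n^'n"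
  assumes "invertible S" "invertible X" "S ** X = X ** S"
  shows "C ** S ** X = C ** X ** S" "C ** matrix_inv S ** X = C ** X ** matrix_inv S"
    "C ** S ** matrix_inv X = C ** matrix_inv X ** S"
    "C ** matrix_inv S ** matrix_inv X = C ** matrix_inv X ** matrix_inv S"
  using commute_with_inverses[OF assms] by (simp_all add: commute_in_product)

section \<open>The matrix exponential\<close>

text \<open>Square complex matrices do not form a normed algebra in the library, but the bounded
  linear operators on \<open>complex^'n\<close> do.  We wrap them in a type \<open>'n op\<close>, instantiate it as a
  Banach algebra, and transport the exponential of that algebra to matrices.\<close>

typedef (overloaded) 'n op = "UNIV :: ((complex^'n::finite) \<Rightarrow>\<^sub>L (complex^'n)) set" by simp

setup_lifting type_definition_op

instantiation op :: (finite) real_normed_algebra_1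
begin
lift_definition norm_op :: "'a op \<Rightarrow> real" is norm .
lift_definition minus_op :: "'a op \<Rightarrow> 'a op \<Rightarrow> 'a op" is "(-)" .
lift_definition plus_op :: "'a op \<Rightarrow> 'a op \<Rightarrow> 'a op" is "(+)" .
lift_definition uminus_op :: "'a op \<Rightarrow> 'a op" is "uminus" .
lift_definition zero_op :: "'a op" is "0" .
lift_definition one_op :: "'a op" is "id_blinfun" .
lift_definition times_op :: "'a op \<Rightarrow> 'a op \<Rightarrow> 'a op" is "(o\<^sub>L)" .
lift_definition scaleR_op :: "real \<Rightarrow> 'a op \<Rightarrow> 'a op" is "scaleR" .
definition dist_op :: "'a op \<Rightarrow> 'a op \<Rightarrow> real" where "dist_op a b = norm (a - b)"
definition uniformity_op :: "('a op \<times> 'a op) filter" where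
  "uniformity_op = (INF e\<in>{0 <..}. principal {(x, y). dist x y < e})"
definition open_op :: "'a op set \<Rightarrow> bool"
  where "open_op S = (\<forall>x\<in>S. \<forall>\<^sub>F (x', y) in uniformity. x' = x \<longrightarrow> y \<in> S)"
definition sgn_op :: "'a op \<Rightarrow> 'a op" where "sgn_op x = scaleR (inverse (norm x)) x"

instance
proof
  fix a b c :: "'a op" and r s :: real
  show "a + b + c = a + (b + c)" by transfer (simp add: algebra_simps)
  show "a + b = b + a" by transfer (simp add: algebra_simps)
  show "0 + a = a" by transfer simp
  show "- a + a = 0" by transfer simp
  show "a - b = a + - b" by transfer simp
  show "r *\<^sub>R (a + b) = r *\<^sub>R a + r *\<^sub>R b" by transfer (simp add: algebra_simps)
  show "(r + s) *\<^sub>R a = r *\<^sub>R a + s *\<^sub>R a" by transfer (simp add: algebra_simps)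
  show "r *\<^sub>R s *\<^sub>R a = (r * s) *\<^sub>R a" by transfer simp
  show "1 *\<^sub>R a = a" by transfer simp
  show "dist a b = norm (a - b)" by (simp add: dist_op_def)
  show "sgn a = inverse (norm a) *\<^sub>R a" by (simp add: sgn_op_def)
  show "(norm a = 0) = (a = 0)" by transfer simp
  show "norm (a + b) \<le> norm a + norm b" by transfer (rule norm_triangle_ineq)
  show "norm (r *\<^sub>R a) = \<bar>r\<bar> * norm a" by transfer simp
  show "a * b * c = a * (b * c)" by transfer (auto intro!: blinfun_eqI)
  show "1 * a = a" by transfer (auto intro!: blinfun_eqI)
  show "a * 1 = a" by transfer (auto intro!: blinfun_eqI)
  show "(a + b) * c = a * c + b * c"
    by transfer (auto intro!: blinfun_eqI simp: blinfun.bilinear_simps)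
  show "a * (b + c) = a * b + a * c"
    by transfer (auto intro!: blinfun_eqI simp: blinfun.bilinear_simps)
  show "(0::'a op) \<noteq> 1"
  proof transfer
    have "blinfun_apply (id_blinfun :: (complex^'a) \<Rightarrow>\<^sub>L (complex^'a)) 1 \<noteq> blinfun_apply 0 1"
      by (simp add: vec_eq_iff)
    thus "(0::(complex^'a) \<Rightarrow>\<^sub>L (complex^'a)) \<noteq> id_blinfun" by metis
  qed
  show "r *\<^sub>R a * b = r *\<^sub>R (a * b)"
    by transfer (auto intro!: blinfun_eqI simp: blinfun.bilinear_simps)
  show "a * r *\<^sub>R b = r *\<^sub>R (a * b)"
    by transfer (auto intro!: blinfun_eqI simp: blinfun.bilinear_simps)
  show "norm (a * b) \<le> norm a * norm b" by transfer (rule norm_blinfun_compose)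
  show "norm (1::'a op) = 1" by transfer simp
  show "uniformity = (INF e\<in>{0 <..}. principal {(x, y). dist x y < (e::real)} :: ('a op \<times> 'a op) filter)"
    by (simp add: uniformity_op_def)
  fix U :: "'a op set"
  show "open U = (\<forall>x\<in>U. \<forall>\<^sub>F (x', y) in uniformity. x' = x \<longrightarrow> y \<in> U)"
    by (simp add: open_op_def)
qed
end

lemma dist_op_Rep: "dist a b = dist (Rep_op a) (Rep_op b)"
  unfolding dist_op_def dist_norm by transfer simp

instance op :: (finite) banach
proof
  fix X :: "nat \<Rightarrow> 'a op"
  assume "Cauchy X"
  hence "Cauchy (\<lambda>n. Rep_op (X n))" unfolding Cauchy_def dist_op_Rep .
  then obtain L where L: "(\<lambda>n. Rep_op (X n)) \<longlonglongrightarrow> L"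
    using convergent_def Cauchy_convergent_iff by blast
  have "X \<longlonglongrightarrow> Abs_op L"
    using L unfolding lim_sequentially dist_op_Rep by (simp add: Abs_op_inverse)
  thus "convergent X" by (auto simp: convergent_def)
qed

definition to_op :: "complex^'n::finite^'n \<Rightarrow> 'n op" where
  "to_op A = Abs_op (Blinfun (\<lambda>v. A *v v))"

definition of_op :: "'n::finite op \<Rightarrow> complex^'n^'n" where
  "of_op L = (\<chi> i j. (blinfun_apply (Rep_op L) (axis j 1)) $ i)"

lemma Rep_to_op: "blinfun_apply (Rep_op (to_op A)) = (\<lambda>v. A *v v)"
  by (simp add: to_op_def Abs_op_inverse bounded_linear_Blinfun_apply linear_conv_bounded_linear)

lemma matrix_vector_mult_axis: "((A::complex^'n::finite^'m) *v axis j 1) $ i = A $ i $ j"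
  by (simp add: matrix_vector_mult_def axis_def if_distrib cong: if_cong)

lemma of_op_to_op [simp]: "of_op (to_op A) = A"
  by (simp add: of_op_def Rep_to_op matrix_vector_mult_axis vec_eq_iff)

lemma to_op_inject: "to_op A = to_op B \<Longrightarrow> A = B"
  by (metis of_op_to_op)

lemma op_eqI: "(\<And>v. blinfun_apply (Rep_op a) v = blinfun_apply (Rep_op b) v) \<Longrightarrow> a = b"
  by (metis Rep_op_inject blinfun_eqI)

lemma to_op_mult: "to_op (A ** B) = to_op A * to_op B"
  by (rule op_eqI) (simp add: times_op.rep_eq Rep_to_op matrix_vector_mul_assoc)
lemma to_op_one: "to_op (mat 1) = 1"
  by (rule op_eqI) (simp add: one_op.rep_eq Rep_to_op)
lemma to_op_add: "to_op (A + B) = to_op A + to_op B"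
  by (rule op_eqI)
    (simp add: plus_op.rep_eq Rep_to_op matrix_vector_mult_add_rdistrib blinfun.bilinear_simps)
lemma to_op_minus: "to_op (- A) = - to_op A"
  by (rule op_eqI) (simp add: uminus_op.rep_eq Rep_to_op matrix_vector_mult_def vec_eq_iff
      sum_negf blinfun.bilinear_simps)
lemma to_op_scaleR: "to_op (r *\<^sub>R A) = r *\<^sub>R to_op A"
  by (rule op_eqI) (simp add: scaleR_op.rep_eq Rep_to_op matrix_vector_mult_def vec_eq_iff
      scaleR_sum_right blinfun.bilinear_simps)

lemma linear_to_op: "linear to_op"
  by (rule linearI) (simp_all add: to_op_add to_op_scaleR)

lemma to_op_mpow: "to_op A ^ k = to_op (mpow A k)"
  by (induct k) (simp_all add: to_op_one to_op_mult)

lemma of_op_to_op_mult: "of_op (to_op A * L) = A ** of_op L"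
  by (simp add: of_op_def times_op.rep_eq Rep_to_op matrix_matrix_mult_def
      matrix_vector_mult_def vec_eq_iff)

lemma norm_axis_one: "norm (axis j (1::complex)) = 1"
proof -
  have "(\<Sum>i\<in>UNIV. (norm (axis j (1::complex) $ i))^2) = (\<Sum>i\<in>UNIV. if i = j then 1 else 0)"
    by (rule sum.cong) (auto simp: axis_def)
  thus ?thesis by (simp add: norm_vec_def L2_set_def)
qed

lemma norm_le_sum_components: "norm (x::'a::real_normed_vector^'n::finite) \<le> (\<Sum>i\<in>UNIV. norm (x $ i))"
  unfolding norm_vec_def by (rule L2_set_le_sum) simp

text \<open>Reading off the matrix of an operator is continuous (each entry is bounded by the
  operator norm).\<close>
lemma bounded_linear_of_op: "bounded_linear (of_op :: 'n::finite op \<Rightarrow> complex^'n^'n)"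
proof -
  have "linear (of_op :: 'n op \<Rightarrow> complex^'n^'n)"
  proof (rule linearI)
    fix a b :: "'n op" and r
    show "of_op (a + b) = of_op a + of_op b"
      by (simp add: of_op_def plus_op.rep_eq vec_eq_iff blinfun.bilinear_simps)
    show "of_op (r *\<^sub>R a) = r *\<^sub>R of_op a"
      by (simp add: of_op_def scaleR_op.rep_eq vec_eq_iff blinfun.bilinear_simps)
  qed
  moreover have "\<exists>K. \<forall>x::'n op. norm (of_op x) \<le> norm x * K"
  proof -
    have entry: "norm (of_op x $ i $ j) \<le> norm x" for x :: "'n op" and i j
    proof -
      have "norm (of_op x $ i $ j) \<le> norm (blinfun_apply (Rep_op x) (axis j 1))"
        unfolding of_op_def by (simp add: Finite_Cartesian_Product.norm_nth_le)
      also have "\<dots> \<le> norm (Rep_op x) * norm (axis j (1::complex))" by (rule norm_blinfun)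
      finally show ?thesis by (simp add: norm_op.rep_eq norm_axis_one)
    qed
    have "norm (of_op x) \<le> norm x * (\<Sum>i\<in>(UNIV::'n set). \<Sum>j\<in>(UNIV::'n set). 1)" for x :: "'n op"
    proof -
      have "norm (of_op x) \<le> (\<Sum>i\<in>UNIV. norm (of_op x $ i))" by (rule norm_le_sum_components)
      also have "\<dots> \<le> (\<Sum>i\<in>UNIV. \<Sum>j\<in>UNIV. norm (of_op x $ i $ j))"
        by (rule sum_mono) (rule norm_le_sum_components)
      also have "\<dots> \<le> (\<Sum>i\<in>(UNIV::'n set). \<Sum>j\<in>(UNIV::'n set). norm x)"
        by (intro sum_mono entry)
      finally show ?thesis by (simp add: sum_distrib_left mult_ac)
    qed
    thus ?thesis by blast
  qed
  ultimately show ?thesis unfolding bounded_linear_def bounded_linear_axioms_def by blast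
qed

text \<open>The operators coming from matrices form a closed set containing the partial sums of
  the exponential series, hence also the exponential itself.\<close>
lemma exp_to_op_is_matrix:
  fixes A :: "complex^'n::finite^'n"
  shows "to_op (of_op (exp (to_op A))) = exp (to_op A)"
proof -
  have closed: "closed {L::'n op. to_op (of_op L) = L}"
  proof (rule closed_Collect_eq)
    show "continuous_on UNIV (\<lambda>L::'n op. to_op (of_op L))"
      using linear_to_op bounded_linear_of_op
      by (intro linear_continuous_on bounded_linear_compose[of to_op of_op, unfolded o_def])
        (simp_all add: linear_conv_bounded_linear)
  qed (simp add: continuous_on_id)
  have lim: "(\<lambda>n. \<Sum>k<n. to_op A ^ k /\<^sub>R fact k) \<longlonglongrightarrow> exp (to_op A)"
    unfolding exp_def using summable_exp_generic[of "to_op A"] by (simp add: summable_LIMSEQ)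
  have partial_sums: "(\<Sum>k<n. to_op A ^ k /\<^sub>R fact k) \<in> {L. to_op (of_op L) = L}" for n
  proof -
    have "(\<Sum>k<n. to_op A ^ k /\<^sub>R fact k) = to_op (\<Sum>k<n. mpow A k /\<^sub>R fact k)"
      by (simp add: to_op_mpow linear_sum[OF linear_to_op] to_op_scaleR)
    thus ?thesis by simp
  qed
  have "exp (to_op A) \<in> {L. to_op (of_op L) = L}"
    by (rule closed_sequentially[OF closed partial_sums lim])
  thus ?thesis by simp
qed

lemma mexp_eq_of_op_exp: "mexp A = of_op (exp (to_op A))"
proof -
  have "of_op (exp (to_op A)) $ i $ j = (\<Sum>k. mpow A k $ i $ j / of_nat (fact k))" for i j
  proof -
    have bl: "bounded_linear (\<lambda>L. of_op L $ i $ j)"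
      using bounded_linear_compose[OF bounded_linear_vec_nth[of j]
          bounded_linear_compose[OF bounded_linear_vec_nth[of i] bounded_linear_of_op]]
      by (simp add: o_def)
    have "of_op (exp (to_op A)) $ i $ j = (\<Sum>k. of_op (to_op A ^ k /\<^sub>R fact k) $ i $ j)"
      unfolding exp_def using bounded_linear.suminf[OF bl summable_exp_generic] by simp
    also have "\<dots> = (\<Sum>k. mpow A k $ i $ j / of_nat (fact k))"
    proof -
      have "of_op (to_op A ^ k /\<^sub>R fact k) = mpow A k /\<^sub>R fact k" for k
        by (simp add: to_op_mpow to_op_scaleR[symmetric])
      moreover have "(mpow A k /\<^sub>R fact k) $ i $ j = mpow A k $ i $ j / of_nat (fact k)" for k
        by (simp only: vector_scaleR_component)
          (simp add: scaleR_conv_of_real divide_inverse mult.commute)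
      ultimately show ?thesis by simp
    qed
    finally show ?thesis .
  qed
  thus ?thesis by (simp add: mexp_def vec_eq_iff)
qed

lemma to_op_mexp: "to_op (mexp A) = exp (to_op A)"
  by (simp add: mexp_eq_of_op_exp exp_to_op_is_matrix)

lemma exp_commuting: "(x::'a::{real_normed_algebra_1,banach}) * y = y * x \<Longrightarrow> exp x * y = y * exp x"
  by (simp add: exp_def suminf_mult[symmetric] summable_exp_generic power_commuting_commutes
      suminf_mult2)

lemma mexp_commute: "C ** D = D ** C \<Longrightarrow> D ** mexp C = mexp C ** D"
proof (rule to_op_inject)
  assume "C ** D = D ** C"
  hence c: "to_op C * to_op D = to_op D * to_op C" by (metis to_op_mult)
  have "to_op (mexp C ** D) = exp (to_op C) * to_op D" by (simp add: to_op_mult to_op_mexp)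
  also have "\<dots> = to_op D * exp (to_op C)" by (rule exp_commuting[OF c])
  also have "\<dots> = to_op (D ** mexp C)" by (simp add: to_op_mult to_op_mexp)
  finally show "to_op (D ** mexp C) = to_op (mexp C ** D)" ..
qed

lemma invertible_mexp: "invertible (mexp C)"
proof -
  have "mexp C ** mexp (- C) = mat 1" "mexp (- C) ** mexp C = mat 1"
    by (rule to_op_inject, simp add: to_op_mult to_op_mexp to_op_minus to_op_one exp_minus_inverse)+
      (simp add: exp_minus_inverse[of "- to_op C", simplified])
  thus ?thesis unfolding invertible_def by blast
qed

lemma mexp_has_vector_derivative:
  assumes "A ** B = B ** A"
  shows "((\<lambda>y. mexp (y *\<^sub>R A + B)) has_vector_derivative A ** mexp (y *\<^sub>R A + B)) (at y)"
proof -
  have c: "(s *\<^sub>R to_op A) * to_op B = to_op B * (s *\<^sub>R to_op A)" for s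
    using assms by (simp flip: to_op_mult)
  have eq: "mexp (s *\<^sub>R A + B) = of_op (exp (s *\<^sub>R to_op A) * exp (to_op B))" for s
    by (simp add: mexp_eq_of_op_exp to_op_add to_op_scaleR exp_add_commuting[OF c])
  have "((\<lambda>s. exp (s *\<^sub>R to_op A) * exp (to_op B)) has_vector_derivative
      (to_op A * exp (y *\<^sub>R to_op A)) * exp (to_op B)) (at y)"
    by (rule bounded_linear.has_vector_derivative[OF bounded_linear_mult_left
          exp_scaleR_has_vector_derivative_left])
  hence "((\<lambda>s. of_op (exp (s *\<^sub>R to_op A) * exp (to_op B))) has_vector_derivative
      of_op ((to_op A * exp (y *\<^sub>R to_op A)) * exp (to_op B))) (at y)"
    by (rule bounded_linear.has_vector_derivative[OF bounded_linear_of_op])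
  moreover have "of_op ((to_op A * exp (y *\<^sub>R to_op A)) * exp (to_op B)) = A ** mexp (y *\<^sub>R A + B)"
    by (simp add: eq mult.assoc of_op_to_op_mult)
  ultimately show ?thesis by (simp add: eq)
qed

section \<open>Calculus of matrix-valued functions\<close>

lemma bounded_bilinear_matrix_mult:
  "bounded_bilinear (\<lambda>(A::complex^'n::finite^'m::finite) (B::complex^'p::finite^'n). A ** B)"
proof -
  have "bilinear (\<lambda>(A::complex^'n::finite^'m::finite) (B::complex^'p::finite^'n). A ** B)"
    unfolding bilinear_def
  proof (intro conjI allI)
    fix A :: "complex^'n^'m" and B :: "complex^'p^'n"
    show "linear (\<lambda>B::complex^'p^'n. A ** B)"
      by (rule linearI) (simp_all add: matrix_add_ldistrib matrix_scalar_ac scalar_matrix_assoc)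
    show "linear (\<lambda>A::complex^'n^'m. A ** B)"
      by (rule linearI) (simp_all add: matrix_add_rdistrib scalar_matrix_assoc)
  qed
  thus ?thesis by (simp add: bilinear_conv_bounded_bilinear)
qed

lemma has_vector_derivative_matrix_mult:
  assumes "(f has_vector_derivative f') (at x)" "(g has_vector_derivative g') (at x)"
  shows "((\<lambda>y. (f y :: complex^'n::finite^'m::finite) ** (g y :: complex^'p::finite^'n))
    has_vector_derivative (f x ** g' + f' ** g x)) (at x)"
  using bounded_bilinear.has_vector_derivative[OF bounded_bilinear_matrix_mult assms] .

lemma has_vector_derivative_matrix_mult_left:
  assumes "(g has_vector_derivative g') (at x)"
  shows "((\<lambda>y. (A :: complex^'n::finite^'m::finite) ** (g y :: complex^'p::finite^'n))
    has_vector_derivative (A ** g')) (at x)"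
  using has_vector_derivative_matrix_mult[OF has_vector_derivative_const assms, of A] by simp

lemma has_vector_derivative_matrix_mult_right:
  assumes "(f has_vector_derivative f') (at x)"
  shows "((\<lambda>y. (f y :: complex^'n::finite^'m::finite) ** (B :: complex^'p::finite^'n))
    has_vector_derivative (f' ** B)) (at x)"
  using has_vector_derivative_matrix_mult[OF assms has_vector_derivative_const, of B] by simp

lemma differentiable_vec_components:
  fixes f :: "real \<Rightarrow> 'a::euclidean_space^'n::finite"
  assumes "\<And>i. (\<lambda>y. f y $ i) differentiable (at x)"
  shows "f differentiable (at x)"
proof -
  have bl: "bounded_linear (\<lambda>c::'a. axis i c :: 'a^'n)" for i
    by (rule linear_conv_bounded_linear[THEN iffD1])
      (rule linearI, simp_all add: axis_def vec_eq_iff)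
  have sum_axis: "g = (\<Sum>i\<in>UNIV. axis i (g $ i))" for g :: "'a^'n"
    by (simp add: vec_eq_iff axis_def sum_component if_distrib cong: if_cong)
  let ?f' = "\<chi> i. vector_derivative (\<lambda>y. f y $ i) (at x)"
  have "((\<lambda>y. f y $ i) has_vector_derivative ?f' $ i) (at x)" for i
    using assms[of i] by (simp add: vector_derivative_works)
  hence "((\<lambda>y. \<Sum>i\<in>UNIV. axis i (f y $ i)) has_vector_derivative (\<Sum>i\<in>UNIV. axis i (?f' $ i))) (at x)"
    by (intro has_vector_derivative_sum bounded_linear.has_vector_derivative[OF bl])
  hence "(f has_vector_derivative ?f') (at x)" by (simp only: sum_axis[symmetric])
  thus ?thesis by (rule differentiableI_vector)
qed

lemma differentiable_vec_component:
  fixes f :: "real \<Rightarrow> 'a::real_normed_vector^'n::finite"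
  assumes "f differentiable (at x)" shows "(\<lambda>y. f y $ i) differentiable (at x)"
proof -
  from assms have "(f has_vector_derivative vector_derivative f (at x)) (at x)"
    by (simp add: vector_derivative_works)
  hence "((\<lambda>y. f y $ i) has_vector_derivative (vector_derivative f (at x)) $ i) (at x)"
    by (rule bounded_linear.has_vector_derivative[OF bounded_linear_vec_nth])
  thus ?thesis by (rule differentiableI_vector)
qed

lemma differentiable_prod_complex:
  fixes f :: "'i \<Rightarrow> real \<Rightarrow> complex"
  assumes "\<And>i. i \<in> I \<Longrightarrow> f i differentiable (at x)"
  shows "(\<lambda>y. \<Prod>i\<in>I. f i y) differentiable (at x)"
proof -
  from assms obtain D where "\<And>i. i \<in> I \<Longrightarrow> (f i has_derivative D i) (at x)"
    unfolding differentiable_def by metis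
  thus ?thesis unfolding differentiable_def by (blast intro: has_derivative_prod)
qed

text \<open>The determinant is a polynomial in the entries, hence differentiable.\<close>
lemma differentiable_det:
  fixes F :: "real \<Rightarrow> complex^'n::finite^'n"
  assumes "\<And>i j. (\<lambda>y. F y $ i $ j) differentiable (at x)"
  shows "(\<lambda>y. det (F y)) differentiable (at x)"
  unfolding det_def
  by (intro differentiable_sum ballI differentiable_mult differentiable_const
      differentiable_prod_complex assms) simp

lemma matrix_inv_cramer:
  fixes A :: "complex^'n::finite^'n"
  assumes "det A \<noteq> 0"
  shows "matrix_inv A = (\<chi> k j. det (\<chi> i l. if l = k then axis j 1 $ i else A $ i $ l) / det A)"
proof -
  have iA: "invertible A" using assms invertible_det_nz by blast
  have "(matrix_inv A) $ k $ j = det (\<chi> i l. if l = k then axis j 1 $ i else A $ i $ l) / det A"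
    for k j
  proof -
    let ?x = "\<chi> k. matrix_inv A $ k $ j"
    have "A *v ?x = (A ** matrix_inv A) *v axis j 1"
      by (simp add: matrix_vector_mult_def matrix_matrix_mult_def vec_eq_iff axis_def
          sum_distrib_left if_distrib cong: if_cong)
    hence "A *v ?x = axis j 1" by (simp add: matrix_inv_right[OF iA])
    hence "?x = (\<chi> k. det (\<chi> i l. if l = k then axis j 1 $ i else A $ i $ l) / det A)"
      using cramer[OF assms] by blast
    thus ?thesis by (simp add: vec_eq_iff)
  qed
  thus ?thesis by (simp add: vec_eq_iff)
qed

lemma eventually_invertible:
  fixes f :: "real \<Rightarrow> complex^'n::finite^'n"
  assumes "f differentiable (at x)" "invertible (f x)"
  shows "eventually (\<lambda>y. det (f y) \<noteq> 0) (nhds x)"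
proof -
  have "(\<lambda>y. det (f y)) differentiable (at x)"
    by (intro differentiable_det differentiable_vec_component assms(1))
  hence "isCont (\<lambda>y. det (f y)) x" using differentiable_imp_continuous_within by blast
  hence "((\<lambda>y. det (f y)) \<longlongrightarrow> det (f x)) (nhds x)"
    using tendsto_at_iff_tendsto_nhds[of "\<lambda>y. det (f y)" x] by (simp add: isCont_def)
  moreover have "det (f x) \<noteq> 0" using assms(2) invertible_det_nz by blast
  ultimately show ?thesis using tendsto_imp_eventually_ne by blast
qed

lemma differentiable_matrix_inv:
  fixes f :: "real \<Rightarrow> complex^'n::finite^'n"
  assumes "f differentiable (at x)" "invertible (f x)"
  shows "(\<lambda>y. matrix_inv (f y)) differentiable (at x)"
proof -
  have entries: "(\<lambda>y. f y $ i $ j) differentiable (at x)" for i j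
    by (intro differentiable_vec_component assms(1))
  have d0: "det (f x) \<noteq> 0" using assms(2) invertible_det_nz by blast
  have det_diff: "(\<lambda>y. det (f y)) differentiable (at x)" by (rule differentiable_det[OF entries])
  define h where "h y = (\<chi> k j. det (\<chi> i l. if l = k then axis j 1 $ i else f y $ i $ l) / det (f y))"
    for y
  have "h differentiable (at x)"
    unfolding h_def
  proof (intro differentiable_vec_components)
    fix k j
    show "(\<lambda>y. (\<chi> k j. det (\<chi> i l. if l = k then axis j 1 $ i else f y $ i $ l) / det (f y)) $ k $ j)
      differentiable (at x)"
      apply simp
      apply (rule differentiable_divide[OF differentiable_det det_diff d0])
      subgoal for i' j' by (cases "j' = k") (simp_all add: entries)
      done
  qed
  hence hd: "(h has_vector_derivative vector_derivative h (at x)) (at x)"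
    by (simp add: vector_derivative_works)
  have ev: "eventually (\<lambda>y. matrix_inv (f y) = h y) (nhds x)"
    using eventually_invertible[OF assms]
    by (rule eventually_mono) (simp add: h_def matrix_inv_cramer)
  have "((\<lambda>y. matrix_inv (f y)) has_vector_derivative vector_derivative h (at x)) (at x)"
    using has_vector_derivative_cong_ev[where f="\<lambda>y. matrix_inv (f y)" and g=h and x=x and S=UNIV]
      hd ev eventually_nhds_x_imp_x[OF ev]
    by (simp add: eventually_mono)
  thus ?thesis by (rule differentiableI_vector)
qed

lemma has_vector_derivative_matrix_inv:
  fixes f :: "real \<Rightarrow> complex^'n::finite^'n"
  assumes fd: "(f has_vector_derivative f') (at x)" and inv: "invertible (f x)"
  shows "((\<lambda>y. matrix_inv (f y)) has_vector_derivative
    - (matrix_inv (f x) ** f' ** matrix_inv (f x))) (at x)"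
proof -
  have fdiff: "f differentiable (at x)" using fd by (rule differentiableI_vector)
  let ?g' = "vector_derivative (\<lambda>y. matrix_inv (f y)) (at x)"
  have gd: "((\<lambda>y. matrix_inv (f y)) has_vector_derivative ?g') (at x)"
    using differentiable_matrix_inv[OF fdiff inv] by (simp add: vector_derivative_works)
  have "((\<lambda>y. f y ** matrix_inv (f y)) has_vector_derivative (f x ** ?g' + f' ** matrix_inv (f x))) (at x)"
    by (rule has_vector_derivative_matrix_mult[OF fd gd])
  moreover have ev: "eventually (\<lambda>y. f y ** matrix_inv (f y) = mat 1) (nhds x)"
    using eventually_invertible[OF fdiff inv]
    by (rule eventually_mono) (simp add: matrix_inv_right invertible_det_nz)
  ultimately have "((\<lambda>y. mat 1) has_vector_derivative (f x ** ?g' + f' ** matrix_inv (f x))) (at x)"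
    using has_vector_derivative_cong_ev[where f="\<lambda>y. f y ** matrix_inv (f y)" and g="\<lambda>y. mat 1"
        and x=x and S=UNIV] eventually_nhds_x_imp_x[OF ev]
    by (simp add: eventually_mono)
  hence "f x ** ?g' + f' ** matrix_inv (f x) = 0"
    using vector_derivative_unique_at has_vector_derivative_const by metis
  hence "?g' = matrix_inv (f x) ** (- (f' ** matrix_inv (f x)))"
    by (metis eq_neg_iff_add_eq_0 inv matrix_inv_left matrix_mul_assoc matrix_mul_lid)
  with gd show ?thesis by (simp add: matrix_neg_right matrix_mul_assoc)
qed

section \<open>The phase matrices\<close>

text \<open>The three kinds of phase matrices are described abstractly by locales recording exactly
  the properties used later.  The parameter \<open>e\<close> is \<open>\<i>\<close> for \<open>\<Xi>\<close> and \<open>-\<i>\<close> for \<open>\<Xi>bar\<close>.\<close>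

locale continuous_phase =
  fixes S :: "complex^'n::finite^'n" and X :: "real \<Rightarrow> real \<Rightarrow> complex^'n^'n" and e :: complex
  assumes dx_phase: "\<And>y t. ((\<lambda>y. X y t) has_vector_derivative - (S ** X y t)) (at y)"
    and dt_phase: "\<And>y t. ((\<lambda>t. X y t) has_vector_derivative - (cscale e (S ** S) ** X y t)) (at t)"
    and commute_phase: "\<And>y t. S ** X y t = X y t ** S"
    and invertible_phase: "\<And>y t. invertible (X y t)"

locale semidiscrete_phase =
  fixes S :: "complex^'n::finite^'n" and X :: "int \<Rightarrow> real \<Rightarrow> complex^'n^'n" and e :: complex
  assumes invertible_S: "invertible S"
    and shift_phase: "\<And>x t. X (x + 1) t = S ** X x t"
    and dt_phase: "\<And>x t. ((\<lambda>t. X x t) has_vector_derivative - (cscale e (omega S) ** X x t)) (at t)"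
    and commute_phase: "\<And>x t. S ** X x t = X x t ** S"
    and invertible_phase: "\<And>x t. invertible (X x t)"

text \<open>The time step of the fully discrete case is \<open>\<Omega>\<^sub>e(S) = (I + e(I - S\<^sup>-\<^sup>1))(I - e(I - S))\<^sup>-\<^sup>1\<close>,
  so that \<open>\<Omega> = \<Omega>\<^sub>\<i>\<close> and \<open>\<Omega>bar = \<Omega>\<^sub>-\<^sub>\<i>\<close>.\<close>

definition time_step :: "complex \<Rightarrow> complex^'n::finite^'n \<Rightarrow> complex^'n^'n" where
  "time_step e S = (mat 1 + cscale e (mat 1 - matrix_inv S)) ** matrix_inv (mat 1 - cscale e (mat 1 - S))"

lemma Omega_eq_time_step: "Omega S = time_step \<i> S"
  by (simp add: Omega_def time_step_def)

lemma Omegabar_eq_time_step: "Omegabar S = time_step (- \<i>) S"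
  by (simp add: Omegabar_def time_step_def cscale_minus_scalar)

locale discrete_phase =
  fixes S :: "complex^'n::finite^'n" and X :: "int \<Rightarrow> int \<Rightarrow> complex^'n^'n" and e :: complex
  assumes invertible_S: "invertible S"
    and invertible_denominator: "invertible (mat 1 - cscale e (mat 1 - S))"
    and invertible_time_step: "invertible (time_step e S)"
    and shift_phase: "\<And>x t. X (x + 1) t = S ** X x t"
    and step_phase: "\<And>x t. X x (t + 1) = time_step e S ** X x t"
    and commute_phase: "\<And>x t. S ** X x t = X x t ** S"
    and invertible_phase: "\<And>x t. invertible (X x t)"

lemma mpow_commute: "A ** B = B ** A \<Longrightarrow> mpow A k ** B = B ** mpow A k"
  by (induct k) (simp_all add: matrix_mul_assoc, metis matrix_mul_assoc)

lemma invertible_mpow: "invertible (A::complex^'n::finite^'n) \<Longrightarrow> invertible (mpow A k)"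
  by (induct k) (simp_all add: invertible_mult, simp add: invertible_def)

lemma mpowi_commute:
  fixes A B :: "complex^'n::finite^'n"
  assumes "invertible A" "A ** B = B ** A" shows "mpowi A x ** B = B ** mpowi A x"
  using mpow_commute[OF assms(2)] mpow_commute[OF matrix_inv_commute[OF assms]]
  by (simp add: mpowi_def)

lemma invertible_mpowi: "invertible (A::complex^'n::finite^'n) \<Longrightarrow> invertible (mpowi A x)"
  by (simp add: mpowi_def invertible_mpow invertible_matrix_inv)

lemma mpowi_succ:
  fixes A :: "complex^'n::finite^'n"
  assumes "invertible A" shows "mpowi A (x + 1) = A ** mpowi A x"
proof (cases "0 \<le> x")
  case True
  hence "nat (x + 1) = Suc (nat x)" by simp
  thus ?thesis using True by (simp add: mpowi_def)
next
  case False
  show ?thesis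
  proof (cases "x = -1")
    case True
    thus ?thesis by (simp add: mpowi_def matrix_inv_right[OF assms])
  next
    case False2: False
    hence "nat (- x) = Suc (nat (- (x + 1)))" "\<not> 0 \<le> x + 1" using False by auto
    thus ?thesis using False by (simp add: mpowi_def matrix_mul_assoc matrix_inv_right[OF assms])
  qed
qed

lemma mpowi_product_commute:
  fixes S Q :: "complex^'n::finite^'n"
  assumes iS: "invertible S" and iQ: "invertible Q" and c: "S ** Q = Q ** S"
  shows "S ** (mpowi S x ** mpowi Q t) = (mpowi S x ** mpowi Q t) ** S"
proof -
  have a: "mpowi S x ** S = S ** mpowi S x" by (rule mpowi_commute[OF iS refl])
  have b: "mpowi Q t ** S = S ** mpowi Q t" by (rule mpowi_commute[OF iQ c[symmetric]])
  show ?thesis by (simp add: matrix_mul_assoc[symmetric] b) (simp add: matrix_mul_assoc a)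
qed

lemma mexp_affine_has_vector_derivative:
  assumes "A ** B = B ** A" "\<And>y. F y = mexp (y *\<^sub>R A + B)" "D = A ** F y"
  shows "(F has_vector_derivative D) (at y)"
proof -
  have "F = (\<lambda>y. mexp (y *\<^sub>R A + B))" using assms(2) by auto
  thus ?thesis using mexp_has_vector_derivative[OF assms(1), of y] assms(3) assms(2) by simp
qed

lemma continuous_phase_mexp:
  "continuous_phase S (\<lambda>x t. mexp (- cscale (complex_of_real x) S - cscale (e * complex_of_real t) (S ** S))) e"
proof
  fix y t
  show "((\<lambda>y. mexp (- cscale (complex_of_real y) S - cscale (e * complex_of_real t) (S ** S)))
    has_vector_derivative - (S ** mexp (- cscale (complex_of_real y) S - cscale (e * complex_of_real t) (S ** S)))) (at y)"
    by (rule mexp_affine_has_vector_derivative[where A="- S" and B="- cscale (e * complex_of_real t) (S ** S)"])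
      (simp_all add: cscale_of_real matrix_ring_simps algebra_simps)
  show "((\<lambda>t. mexp (- cscale (complex_of_real y) S - cscale (e * complex_of_real t) (S ** S)))
    has_vector_derivative - (cscale e (S ** S) ** mexp (- cscale (complex_of_real y) S - cscale (e * complex_of_real t) (S ** S)))) (at t)"
    by (rule mexp_affine_has_vector_derivative[where A="- cscale e (S ** S)" and B="- (y *\<^sub>R S)"])
      (simp_all add: cscale_of_real cscale_mult_of_real matrix_ring_simps algebra_simps
        scalar_matrix_assoc[symmetric] matrix_scalar_ac cscale_scaleR)
  show "S ** mexp (- cscale (complex_of_real y) S - cscale (e * complex_of_real t) (S ** S))
    = mexp (- cscale (complex_of_real y) S - cscale (e * complex_of_real t) (S ** S)) ** S"
    by (rule mexp_commute) (simp add: matrix_ring_simps cscale_of_real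
        scalar_matrix_assoc[symmetric] matrix_scalar_ac cscale_scaleR)
  show "invertible (mexp (- cscale (complex_of_real y) S - cscale (e * complex_of_real t) (S ** S)))"
    by (rule invertible_mexp)
qed

lemma continuous_phase_XiC: "continuous_phase S (XiC S) \<i>"
  using continuous_phase_mexp[of S \<i>] by (simp add: XiC_def[abs_def])

lemma continuous_phase_XibC: "continuous_phase Sb (XibC Sb) (- \<i>)"
  using continuous_phase_mexp[of Sb "- \<i>"] by (simp add: XibC_def[abs_def] cscale_minus_scalar)

lemma omega_commute: "invertible S \<Longrightarrow> S ** omega S = omega S ** S"
  by (simp add: omega_def matrix_ring_simps matrix_inv_right matrix_inv_left)

lemma semidiscrete_phase_mexp:
  assumes iS: "invertible S"
  shows "semidiscrete_phase S (\<lambda>x t. mpowi S x ** mexp (- cscale (e * complex_of_real t) (omega S))) e"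
proof
  fix x :: int and t :: real
  let ?E = "\<lambda>t. mexp (- cscale (e * complex_of_real t) (omega S))"
  have comm_E: "S ** ?E t = ?E t ** S"
    by (rule mexp_commute) (simp add: matrix_ring_simps omega_commute[OF iS])
  have comm_pow: "mpowi S x ** cscale e (omega S) = cscale e (omega S) ** mpowi S x"
    using mpowi_commute[OF iS omega_commute[OF iS]] by (simp add: matrix_ring_simps)
  show "invertible S" by fact
  show "mpowi S (x + 1) ** ?E t = S ** (mpowi S x ** ?E t)"
    by (simp add: mpowi_succ[OF iS] matrix_mul_assoc)
  have "(?E has_vector_derivative - cscale e (omega S) ** ?E t) (at t)"
    by (rule mexp_affine_has_vector_derivative[where A="- cscale e (omega S)" and B=0])
      (simp_all add: cscale_mult_of_real)
  hence "((\<lambda>t. mpowi S x ** ?E t) has_vector_derivative mpowi S x ** (- cscale e (omega S) ** ?E t)) (at t)"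
    by (rule has_vector_derivative_matrix_mult_left)
  moreover have "mpowi S x ** (- cscale e (omega S) ** ?E t) = - (cscale e (omega S) ** (mpowi S x ** ?E t))"
    by (simp add: matrix_neg_left matrix_neg_right matrix_mul_assoc comm_pow)
  ultimately show "((\<lambda>t. mpowi S x ** ?E t) has_vector_derivative - (cscale e (omega S) ** (mpowi S x ** ?E t))) (at t)"
    by simp
  show "S ** (mpowi S x ** ?E t) = mpowi S x ** ?E t ** S"
    using mpowi_commute[OF iS refl, of x] comm_E by (metis matrix_mul_assoc)
  show "invertible (mpowi S x ** ?E t)"
    by (simp add: invertible_mult invertible_mpowi[OF iS] invertible_mexp)
qed

lemma semidiscrete_phase_XiS: "invertible S \<Longrightarrow> semidiscrete_phase S (XiS S) \<i>"
  using semidiscrete_phase_mexp[of S \<i>] by (simp add: XiS_def[abs_def])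

lemma semidiscrete_phase_XibS: "invertible Sb \<Longrightarrow> semidiscrete_phase Sb (XibS Sb) (- \<i>)"
  using semidiscrete_phase_mexp[of Sb "- \<i>"] by (simp add: XibS_def[abs_def] cscale_minus_scalar)

text \<open>The time step commutes with \<open>S\<close>, being a rational function of it.\<close>
lemma time_step_commute:
  assumes iS: "invertible S" and iW: "invertible (mat 1 - cscale e (mat 1 - S))"
  shows "S ** time_step e S = time_step e S ** S"
proof -
  let ?P = "mat 1 + cscale e (mat 1 - matrix_inv S)" and ?W = "mat 1 - cscale e (mat 1 - S)"
  have cW: "S ** matrix_inv ?W = matrix_inv ?W ** S"
    using matrix_inv_commute[OF iW, of S] by (simp add: matrix_ring_simps)
  have cP: "S ** ?P = ?P ** S" by (simp add: matrix_ring_simps matrix_inv_right[OF iS] matrix_inv_left[OF iS])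
  have "time_step e S ** S = ?P ** (matrix_inv ?W ** S)" by (simp add: time_step_def matrix_mul_assoc)
  also have "\<dots> = (?P ** S) ** matrix_inv ?W" by (simp only: matrix_mul_assoc[symmetric] cW[symmetric])
  also have "\<dots> = S ** time_step e S" by (simp add: cP[symmetric] time_step_def matrix_mul_assoc)
  finally show ?thesis by simp
qed

lemma discrete_phase_mpowi:
  assumes "invertible S" "invertible (mat 1 - cscale e (mat 1 - S))" "invertible (time_step e S)"
  shows "discrete_phase S (\<lambda>x t. mpowi S x ** mpowi (time_step e S) t) e"
proof -
  note c = time_step_commute[OF assms(1,2)]
  show ?thesis
  proof
    fix x t :: int
    show "mpowi S (x + 1) ** mpowi (time_step e S) t = S ** (mpowi S x ** mpowi (time_step e S) t)"
      by (simp add: mpowi_succ[OF assms(1)] matrix_mul_assoc)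
    show "mpowi S x ** mpowi (time_step e S) (t + 1) = time_step e S ** (mpowi S x ** mpowi (time_step e S) t)"
      using mpowi_commute[OF assms(1) c, of x]
      by (simp add: mpowi_succ[OF assms(3)] matrix_mul_assoc)
    show "S ** (mpowi S x ** mpowi (time_step e S) t) = mpowi S x ** mpowi (time_step e S) t ** S"
      by (rule mpowi_product_commute[OF assms(1,3) c])
    show "invertible (mpowi S x ** mpowi (time_step e S) t)"
      by (simp add: invertible_mult invertible_mpowi assms)
  qed (use assms in auto)
qed

lemma discrete_phase_XiF:
  "invertible S \<Longrightarrow> invertible (mat 1 - cscale \<i> (mat 1 - S)) \<Longrightarrow> invertible (Omega S)
    \<Longrightarrow> discrete_phase S (XiF S) \<i>"
  using discrete_phase_mpowi[of S \<i>] by (simp add: XiF_def[abs_def] Omega_eq_time_step)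

lemma discrete_phase_XibF:
  "invertible Sb \<Longrightarrow> invertible (mat 1 + cscale \<i> (mat 1 - Sb)) \<Longrightarrow> invertible (Omegabar Sb)
    \<Longrightarrow> discrete_phase Sb (XibF Sb) (- \<i>)"
  using discrete_phase_mpowi[of Sb "- \<i>"]
  by (simp add: XibF_def[abs_def] Omegabar_eq_time_step cscale_minus_scalar)

section \<open>Algebraic identities for the solution formulas\<close>

text \<open>A phase point: phase matrices \<open>X\<close>, \<open>Xb\<close> commuting with \<open>S\<close>, \<open>Sb\<close>, together with the
  resolvents \<open>M = Xb\<^sup>-\<^sup>1 - Kb X K\<close>, \<open>N = X\<^sup>-\<^sup>1 - K Xb Kb\<close> and their inverses \<open>Mi\<close>, \<open>Ni\<close>.
  In this notation \<open>q = U Mi Vb\<close>, \<open>qb = Ub Ni V\<close>, \<open>p = U Xb Kb Ni V\<close>.\<close>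

locale phase_point =
  fixes U :: "complex^'n2::finite^'m1::finite" and Ub :: "complex^'n1::finite^'m2::finite"
    and V :: "complex^'m1^'n1" and Vb :: "complex^'m2^'n2"
    and S :: "complex^'n1^'n1" and Sb :: "complex^'n2^'n2"
    and K :: "complex^'n2^'n1" and Kb :: "complex^'n1^'n2"
    and X :: "complex^'n1^'n1" and Xb :: "complex^'n2^'n2"
    and M Mi :: "complex^'n2^'n2" and N Ni :: "complex^'n1^'n1"
  assumes iX: "invertible X" and iXb: "invertible Xb"
    and cX: "S ** X = X ** S" and cXb: "Sb ** Xb = Xb ** Sb"
    and hM: "M = matrix_inv Xb - Kb ** X ** K"
    and hN: "N = matrix_inv X - K ** Xb ** Kb"
    and Mi1: "M ** Mi = mat 1" and Mi2: "Mi ** M = mat 1"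
    and Ni1: "N ** Ni = mat 1" and Ni2: "Ni ** N = mat 1"
begin

lemmas phase_inverse_simps =
  matrix_inv_right[OF iX] matrix_inv_left[OF iX] matrix_inv_cancel_right[OF iX] matrix_inv_cancel_left[OF iX]
  matrix_inv_right[OF iXb] matrix_inv_left[OF iXb] matrix_inv_cancel_right[OF iXb] matrix_inv_cancel_left[OF iXb]

lemmas resolvent_simps = Mi1 Mi2 Ni1 Ni2
  cancel_inverse[OF Mi1] cancel_inverse[OF Mi2] cancel_inverse[OF Ni1] cancel_inverse[OF Ni2]

lemma resolvent_push: "N ** X ** K = K ** Xb ** M" "Kb ** X ** N = M ** Xb ** Kb"
  by (simp_all add: hM hN matrix_ring_simps phase_inverse_simps)

lemma resolvent_inverse_push: "Mi ** Kb ** X = Xb ** Kb ** Ni" "X ** K ** Mi = Ni ** K ** Xb"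
proof -
  have "Mi ** Kb ** X = Mi ** (Kb ** X ** N) ** Ni" by (simp add: matrix_mul_assoc resolvent_simps)
  also have "\<dots> = Xb ** Kb ** Ni" by (simp add: resolvent_push matrix_mul_assoc resolvent_simps)
  finally show "Mi ** Kb ** X = Xb ** Kb ** Ni" .
  have "X ** K ** Mi = Ni ** (N ** X ** K) ** Mi" by (simp add: matrix_mul_assoc resolvent_simps)
  also have "\<dots> = Ni ** K ** Xb" by (simp add: resolvent_push matrix_mul_assoc resolvent_simps)
  finally show "X ** K ** Mi = Ni ** K ** Xb" .
qed

lemma resolvent_inverse_push_in_product:
  "C ** Xb ** Kb ** Ni = C ** Mi ** Kb ** X" "D ** Ni ** K ** Xb = D ** X ** K ** Mi"
  using arg_cong[OF resolvent_inverse_push(1), of "\<lambda>Z. C ** Z"]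
    arg_cong[OF resolvent_inverse_push(2), of "\<lambda>Z. D ** Z"]
  by (simp_all only: matrix_mul_assoc)

lemma p_alt: "U ** Xb ** Kb ** Ni ** V = U ** Mi ** Kb ** X ** V"
  by (simp add: resolvent_inverse_push_in_product)

end

locale discrete_point = phase_point +
  assumes iS: "invertible S" and iSb: "invertible Sb"
    and syl1: "matrix_inv S ** K - K ** Sb = V ** U"
    and syl2: "matrix_inv Sb ** Kb - Kb ** S = Vb ** Ub"
begin

lemmas point_simps = phase_inverse_simps resolvent_simps
  matrix_inv_right[OF iS] matrix_inv_left[OF iS] matrix_inv_cancel_right[OF iS] matrix_inv_cancel_left[OF iS]
  matrix_inv_right[OF iSb] matrix_inv_left[OF iSb] matrix_inv_cancel_right[OF iSb] matrix_inv_cancel_left[OF iSb]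
  commute_with_inverses[OF iS iX cX] commute_with_inverses_in_product[OF iS iX cX]
  commute_with_inverses[OF iSb iXb cXb] commute_with_inverses_in_product[OF iSb iXb cXb]

lemma syl1_in_product: "C ** V ** U = C ** (matrix_inv S ** K - K ** Sb)"
  by (simp add: matrix_mul_assoc[symmetric] syl1)
lemma syl2_in_product: "C ** Vb ** Ub = C ** (matrix_inv Sb ** Kb - Kb ** S)"
  by (simp add: matrix_mul_assoc[symmetric] syl2)

text \<open>The resolvent \<open>M\<close> at the previous lattice site \<open>X' = S\<^sup>-\<^sup>1X\<close>, \<open>Xb' = Sb\<^sup>-\<^sup>1Xb\<close>.\<close>
abbreviation "M_prev \<equiv> matrix_inv Xb ** Sb - Kb ** matrix_inv S ** X ** K"

lemma M_prev_eq: "matrix_inv Sb ** M_prev = M - Vb ** Ub ** matrix_inv S ** X ** K"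
  by (simp add: hM matrix_ring_simps point_simps syl2_in_product flip: syl2)

text \<open>The resolvent \<open>M\<close> at the next lattice site \<open>X' = SX\<close>, \<open>Xb' = Sb Xb\<close>.\<close>
lemma M_next_eq:
  "matrix_inv Xb ** matrix_inv Sb - Kb ** S ** X ** K = matrix_inv Sb ** M + Vb ** Ub ** X ** K"
  by (simp add: hM matrix_ring_simps point_simps syl2_in_product flip: syl2)

lemma M_prev_identity: "X ** K ** Mi ** M_prev - matrix_inv S ** X ** K = - (Ni ** V ** U)"
proof -
  let ?Z = "X ** K ** Mi ** M_prev - matrix_inv S ** X ** K"
  have "N ** ?Z = N ** X ** K ** Mi ** M_prev - N ** matrix_inv S ** X ** K"
    by (simp add: matrix_ring_simps)
  also have "\<dots> = K ** Xb ** M_prev - N ** matrix_inv S ** X ** K"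
    by (simp add: resolvent_push point_simps)
  also have "\<dots> = K ** Sb - matrix_inv S ** K"
    by (simp add: hN matrix_ring_simps point_simps)
  also have "\<dots> = - (V ** U)" using syl1 by (simp add: algebra_simps)
  finally have "N ** ?Z = - (V ** U)" .
  hence "Ni ** (N ** ?Z) = Ni ** (- (V ** U))" by simp
  thus ?thesis by (simp add: matrix_ring_simps point_simps)
qed

lemma M_prev_shifted: "M_prev + cscale e M + Kb ** X ** V ** U = M ** (Sb + cscale e (mat 1))"
  by (simp add: hM matrix_ring_simps point_simps syl1_in_product cscale_scalar_simps)

lemma semidiscrete_resolvent_identity:
  assumes ee: "e * e = -1"
  shows "cscale e (- (- (matrix_inv Xb ** (cscale e (omega Sb) ** Xb) ** matrix_inv Xb)
       - Kb ** (- (cscale e (omega S) ** X)) ** K))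
     + M_prev + matrix_inv Sb ** M + Vb ** Ub ** X ** K - cscale 2 M = 0"
  by (simp add: hM omega_def matrix_ring_simps point_simps ee square_eq_minus_one[OF ee]
      cscale_scalar_simps syl2_in_product flip: syl2)

text \<open>The semi-discrete equation for \<open>q\<close>, given the values \<open>qR\<close>, \<open>qL\<close> at the neighbouring sites
  through the identities established below for lattice steps.\<close>
lemma semidiscrete_q_equation:
  assumes ee: "e * e = -1"
    and right: "qR ** (mat 1 - Ub ** Ni ** V ** U ** Mi ** Vb) = U ** Mi ** M_prev ** Mi ** Vb"
    and left: "(mat 1 - U ** Mi ** Vb ** Ub ** Ni ** V) ** qL
       = U ** Mi ** matrix_inv Sb ** Vb + U ** Mi ** Vb ** Ub ** X ** K ** Mi ** Vb"
    and qt: "qt = - (U ** Mi ** (- (matrix_inv Xb ** (cscale e (omega Sb) ** Xb) ** matrix_inv Xb)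
       - Kb ** (- (cscale e (omega S) ** X)) ** K) ** Mi ** Vb)"
  shows "cscale e qt + qR - cscale 2 (U ** Mi ** Vb) + qL
     - qR ** (Ub ** Ni ** V) ** (U ** Mi ** Vb) - (U ** Mi ** Vb) ** (Ub ** Ni ** V) ** qL = 0"
    (is "?L = 0")
proof -
  let ?Mt = "- (matrix_inv Xb ** (cscale e (omega Sb) ** Xb) ** matrix_inv Xb)
       - Kb ** (- (cscale e (omega S) ** X)) ** K"
  have "?L = cscale e qt + qR ** (mat 1 - Ub ** Ni ** V ** U ** Mi ** Vb)
     + (mat 1 - U ** Mi ** Vb ** Ub ** Ni ** V) ** qL - cscale 2 (U ** Mi ** Vb)"
    by (simp add: matrix_ring_simps algebra_simps)
  also have "\<dots> = U ** Mi ** (cscale e (- ?Mt) + M_prev + matrix_inv Sb ** M + Vb ** Ub ** X ** K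
      - cscale 2 M) ** Mi ** Vb"
    unfolding right left qt by (simp add: matrix_ring_simps algebra_simps resolvent_simps)
  also have "\<dots> = 0" by (simp only: semidiscrete_resolvent_identity[OF ee]) simp
  finally show ?thesis .
qed

end

lemma discrete_point_intro:
  fixes U :: "complex^'n2::finite^'m1::finite" and Ub :: "complex^'n1::finite^'m2::finite"
    and V :: "complex^'m1^'n1" and Vb :: "complex^'m2^'n2"
    and S :: "complex^'n1^'n1" and Sb :: "complex^'n2^'n2"
    and K :: "complex^'n2^'n1" and Kb :: "complex^'n1^'n2"
  assumes "invertible S" "invertible Sb" "matrix_inv S ** K - K ** Sb = V ** U"
    "matrix_inv Sb ** Kb - Kb ** S = Vb ** Ub" "invertible X" "invertible Xb"
    "S ** X = X ** S" "Sb ** Xb = Xb ** Sb" "regular K Kb X Xb"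
  shows "discrete_point U Ub V Vb S Sb K Kb X Xb (matrix_inv Xb - Kb ** X ** K)
    (matrix_inv (matrix_inv Xb - Kb ** X ** K)) (matrix_inv X - K ** Xb ** Kb)
    (matrix_inv (matrix_inv X - K ** Xb ** Kb))"
  using assms by unfold_locales (simp_all add: regular_def matrix_inv_right matrix_inv_left)

text \<open>With \<open>q = U Mi Vb\<close> and \<open>q' = U M1i Vb\<close>
  the identities below express \<open>q'\<close> through data at \<open>x\<close>; they give the space part of both
  discrete systems and the equation for \<open>p\<close>.\<close>

locale lattice_step = p0: discrete_point U Ub V Vb S Sb K Kb X Xb M Mi N Ni
  + p1: discrete_point U Ub V Vb S Sb K Kb X1 Xb1 M1 M1i N1 N1i
  for U :: "complex^'n2::finite^'m1::finite" and Ub :: "complex^'n1::finite^'m2::finite"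
    and V :: "complex^'m1^'n1" and Vb :: "complex^'m2^'n2"
    and S :: "complex^'n1^'n1" and Sb :: "complex^'n2^'n2"
    and K :: "complex^'n2^'n1" and Kb :: "complex^'n1^'n2"
    and X :: "complex^'n1^'n1" and Xb :: "complex^'n2^'n2"
    and M Mi :: "complex^'n2^'n2" and N Ni :: "complex^'n1^'n1"
    and X1 :: "complex^'n1^'n1" and Xb1 :: "complex^'n2^'n2"
    and M1 M1i :: "complex^'n2^'n2" and N1 N1i :: "complex^'n1^'n1" +
  assumes hX1: "X1 = S ** X" and hXb1: "Xb1 = Sb ** Xb"
begin

lemma inv_Xb1: "matrix_inv Xb1 = matrix_inv Xb ** matrix_inv Sb"
  by (simp add: hXb1 matrix_inv_mult p0.iSb p0.iXb)

lemma M_next: "M1 = matrix_inv Sb ** M + Vb ** Ub ** X ** K"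
  using p0.M_next_eq by (simp add: p1.hM inv_Xb1 hX1 p0.hM matrix_mul_assoc)

lemma M_prev_of_next: "matrix_inv Xb1 ** Sb - Kb ** matrix_inv S ** X1 ** K = M"
  by (simp add: inv_Xb1 hX1 p0.hM p0.point_simps matrix_mul_assoc)

lemma next_identity: "N1i ** V ** U = - (X1 ** K ** M1i ** M - X ** K)"
proof -
  have "matrix_inv S ** X1 ** K = X ** K"
    by (simp add: hX1 p0.point_simps matrix_mul_assoc)
  with p1.M_prev_identity show ?thesis unfolding M_prev_of_next by (simp add: algebra_simps)
qed

lemma resolvent_step: "Kb ** X1 ** N - M1 ** Xb ** Kb = - (Vb ** Ub)"
  by (simp add: p1.hM inv_Xb1 hX1 p0.hN matrix_ring_simps p0.point_simps flip: p0.syl2)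

lemma q_next_backward:
  "U ** M1i ** Vb ** (mat 1 - Ub ** Ni ** V ** U ** Mi ** Vb) = U ** Mi ** p0.M_prev ** Mi ** Vb"
proof -
  have eC: "C ** Ni ** V ** U = C ** (- (X ** K ** Mi ** p0.M_prev - matrix_inv S ** X ** K))"
    for C :: "complex^'n1^'m1"
    using arg_cong[OF p0.M_prev_identity, of "\<lambda>Z. C ** (- Z)"] by (simp add: matrix_ring_simps)
  have "U ** Mi ** p0.M_prev ** Mi ** Vb = U ** M1i ** (M1 ** Mi ** p0.M_prev ** Mi ** Vb)"
    by (simp add: matrix_mul_assoc cancel_inverse[OF p1.Mi2])
  also have "M1 ** Mi ** p0.M_prev ** Mi ** Vb
    = matrix_inv Sb ** p0.M_prev ** Mi ** Vb + Vb ** Ub ** X ** K ** Mi ** p0.M_prev ** Mi ** Vb"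
    by (simp add: M_next matrix_ring_simps cancel_inverse[OF p0.Mi1])
  also have "matrix_inv Sb ** p0.M_prev ** Mi ** Vb = Vb - Vb ** Ub ** matrix_inv S ** X ** K ** Mi ** Vb"
    by (simp only: p0.M_prev_eq) (simp add: matrix_ring_simps cancel_inverse[OF p0.Mi1] p0.Mi1)
  finally have R: "U ** Mi ** p0.M_prev ** Mi ** Vb = U ** M1i ** (Vb
      - Vb ** Ub ** matrix_inv S ** X ** K ** Mi ** Vb + Vb ** Ub ** X ** K ** Mi ** p0.M_prev ** Mi ** Vb)" .
  show ?thesis unfolding R by (simp add: matrix_ring_simps eC algebra_simps)
qed

lemma q_next_forward:
  "(mat 1 - U ** M1i ** Vb ** Ub ** N1i ** V) ** (U ** Mi ** Vb)
     = U ** M1i ** matrix_inv Sb ** Vb + U ** M1i ** Vb ** Ub ** X1 ** K ** M1i ** Vb"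
proof -
  have eC: "C ** N1i ** V ** U = C ** (- (X1 ** K ** M1i ** M - X ** K))" for C :: "complex^'n1^'m1"
    using arg_cong[OF next_identity, of "\<lambda>Z. C ** Z"] by (simp only: matrix_mul_assoc)
  have "U ** Mi ** Vb = U ** M1i ** (M1 ** Mi ** Vb)"
    by (simp add: matrix_mul_assoc cancel_inverse[OF p1.Mi2])
  also have "M1 ** Mi ** Vb = matrix_inv Sb ** Vb + Vb ** Ub ** X ** K ** Mi ** Vb"
    by (simp add: M_next matrix_ring_simps cancel_inverse[OF p0.Mi1])
  finally have R: "U ** Mi ** Vb = U ** M1i ** (matrix_inv Sb ** Vb + Vb ** Ub ** X ** K ** Mi ** Vb)" .
  have L: "(mat 1 - U ** M1i ** Vb ** Ub ** N1i ** V) ** (U ** Mi ** Vb) = U ** Mi ** Vb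
     + U ** M1i ** Vb ** Ub ** X1 ** K ** M1i ** Vb - U ** M1i ** Vb ** Ub ** X ** K ** Mi ** Vb"
    by (simp add: matrix_ring_simps eC cancel_inverse[OF p0.Mi1])
  show ?thesis unfolding L by (subst R) (simp add: matrix_ring_simps algebra_simps)
qed

lemma p_difference:
  "U ** Xb1 ** Kb ** N1i ** V - U ** Xb ** Kb ** Ni ** V = - (U ** M1i ** Vb ** Ub ** Ni ** V)"
proof -
  have "U ** Xb1 ** Kb ** N1i ** V = U ** (M1i ** Kb ** X1) ** N ** Ni ** V"
    by (simp add: p1.resolvent_inverse_push matrix_mul_assoc cancel_inverse[OF p0.Ni1])
  moreover have "U ** Xb ** Kb ** Ni ** V = U ** M1i ** M1 ** Xb ** Kb ** Ni ** V"
    by (simp add: cancel_inverse[OF p1.Mi2])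
  ultimately have "U ** Xb1 ** Kb ** N1i ** V - U ** Xb ** Kb ** Ni ** V
     = U ** M1i ** (Kb ** X1 ** N - M1 ** Xb ** Kb) ** Ni ** V"
    by (simp add: matrix_ring_simps)
  also have "\<dots> = - (U ** M1i ** Vb ** Ub ** Ni ** V)" by (simp add: resolvent_step matrix_ring_simps)
  finally show ?thesis .
qed

end

text \<open>Times \<open>t\<close> and \<open>t + 1\<close>, with the time-step relations in the form obtained from
  \<open>XT = \<Omega>\<^sub>e(S) X\<close> and \<open>XbT = \<Omega>\<^sub>-\<^sub>e(Sb) Xb\<close> (see \<open>time_step_relation\<close> below).\<close>

locale time_step_pair = p0: discrete_point U Ub V Vb S Sb K Kb X Xb M Mi N Ni
  + pT: discrete_point U Ub V Vb S Sb K Kb XT XbT MT MTi NT NTi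
  for U :: "complex^'n2::finite^'m1::finite" and Ub :: "complex^'n1::finite^'m2::finite"
    and V :: "complex^'m1^'n1" and Vb :: "complex^'m2^'n2"
    and S :: "complex^'n1^'n1" and Sb :: "complex^'n2^'n2"
    and K :: "complex^'n2^'n1" and Kb :: "complex^'n1^'n2"
    and X :: "complex^'n1^'n1" and Xb :: "complex^'n2^'n2"
    and M Mi :: "complex^'n2^'n2" and N Ni :: "complex^'n1^'n1"
    and XT :: "complex^'n1^'n1" and XbT :: "complex^'n2^'n2"
    and MT MTi :: "complex^'n2^'n2" and NT NTi :: "complex^'n1^'n1" +
  fixes e :: complex
  assumes tX: "S ** XT = cscale (1 + e) XT + cscale (1 - e) X - X ** matrix_inv S"
    and tXb: "matrix_inv Sb ** matrix_inv XbT
      = cscale (1 + e) (matrix_inv XbT) - matrix_inv Xb ** Sb - cscale (e - 1) (matrix_inv Xb)"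
begin

lemma tX_in_product: "C ** S ** XT = C ** (cscale (1 + e) XT + cscale (1 - e) X - X ** matrix_inv S)"
  using arg_cong[OF tX, of "\<lambda>Z. C ** Z"] by (simp only: matrix_mul_assoc)
lemma tXb_in_product: "C ** matrix_inv Sb ** matrix_inv XbT
  = C ** (cscale (1 + e) (matrix_inv XbT) - matrix_inv Xb ** Sb - cscale (e - 1) (matrix_inv Xb))"
  using arg_cong[OF tXb, of "\<lambda>Z. C ** Z"] by (simp only: matrix_mul_assoc)

lemma resolvent_time_step:
  "matrix_inv Sb ** MT - cscale (1 + e) MT - Kb ** X ** V ** U + Vb ** Ub ** XT ** K
   = - (M ** (Sb + cscale (e - 1) (mat 1)))"
  by (simp add: pT.hM p0.hM matrix_ring_simps p0.point_simps p0.syl1_in_product p0.syl2_in_product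
      tX tX_in_product tXb tXb_in_product cscale_scalar_simps flip: p0.syl2)

text \<open>The fully discrete equation for \<open>q\<close>, given \<open>qR = q(x+1,t+1)\<close> and \<open>qL = q(x-1,t)\<close>
  through the lattice-step identities.\<close>
lemma fully_discrete_q_equation:
  assumes right: "qR ** (mat 1 - Ub ** NTi ** V ** U ** MTi ** Vb) = U ** MTi ** pT.M_prev ** MTi ** Vb"
    and left: "(mat 1 - U ** Mi ** Vb ** Ub ** Ni ** V) ** qL
       = U ** Mi ** matrix_inv Sb ** Vb + U ** Mi ** Vb ** Ub ** X ** K ** Mi ** Vb"
  shows "cscale e (U ** MTi ** Vb - U ** Mi ** Vb) + (qR - U ** MTi ** Vb) - (U ** Mi ** Vb - qL)
     - qR ** (Ub ** NTi ** V) ** (U ** MTi ** Vb) - (U ** Mi ** Vb) ** (Ub ** Ni ** V) ** qL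
     + (U ** XbT ** Kb ** NTi ** V - U ** Xb ** Kb ** Ni ** V) ** (U ** MTi ** Vb)
     + (U ** Mi ** Vb) ** (Ub ** XT ** K ** MTi ** Vb - Ub ** X ** K ** Mi ** Vb) = 0"
    (is "?L = 0")
proof -
  have "?L = qR ** (mat 1 - Ub ** NTi ** V ** U ** MTi ** Vb)
     + (mat 1 - U ** Mi ** Vb ** Ub ** Ni ** V) ** qL
     + cscale (e - 1) (U ** MTi ** Vb) - cscale (1 + e) (U ** Mi ** Vb)
     + (U ** XbT ** Kb ** NTi ** V - U ** Xb ** Kb ** Ni ** V) ** (U ** MTi ** Vb)
     + U ** Mi ** Vb ** Ub ** XT ** K ** MTi ** Vb - U ** Mi ** Vb ** Ub ** X ** K ** Mi ** Vb"
    by (simp add: matrix_ring_simps cscale_scalar_simps algebra_simps)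
  also have "\<dots> = U ** MTi ** (pT.M_prev + cscale (e - 1) MT + Kb ** XT ** V ** U) ** MTi ** Vb
     + U ** Mi ** (matrix_inv Sb ** MT - cscale (1 + e) MT - Kb ** X ** V ** U + Vb ** Ub ** XT ** K)
       ** MTi ** Vb"
    unfolding right left
    by (simp add: matrix_ring_simps cscale_scalar_simps algebra_simps p0.resolvent_inverse_push_in_product
        pT.resolvent_inverse_push_in_product pT.resolvent_simps p0.resolvent_simps)
  also have "\<dots> = 0"
    unfolding pT.M_prev_shifted resolvent_time_step
    by (simp add: matrix_ring_simps pT.resolvent_simps p0.resolvent_simps)
  finally show ?thesis .
qed

end

locale continuous_point = phase_point +
  assumes syl1: "S ** K + K ** Sb = V ** U"
    and syl2: "Sb ** Kb + Kb ** S = Vb ** Ub"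
begin

lemma cXi: "S ** matrix_inv X = matrix_inv X ** S"
  using matrix_inv_commute[OF iX cX[symmetric]] by simp
lemma cXbi: "Sb ** matrix_inv Xb = matrix_inv Xb ** Sb"
  using matrix_inv_commute[OF iXb cXb[symmetric]] by simp

lemmas point_simps = phase_inverse_simps resolvent_simps
  cX commute_in_product[OF cX] cXb commute_in_product[OF cXb]
  cXi commute_in_product[OF cXi] cXbi commute_in_product[OF cXbi]

lemma syl1_in_product: "C ** V ** U = C ** (S ** K + K ** Sb)"
  using arg_cong[OF syl1, of "\<lambda>Z. C ** Z"] by (simp only: matrix_mul_assoc)
lemma syl2_in_product: "C ** Vb ** Ub = C ** (Sb ** Kb + Kb ** S)"
  using arg_cong[OF syl2, of "\<lambda>Z. C ** Z"] by (simp only: matrix_mul_assoc)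

text \<open>The derivatives of \<open>M\<close> in \<open>x\<close> and in \<open>t\<close> (with \<open>X\<^sub>x = -SX\<close>, \<open>Xb\<^sub>x = -Sb Xb\<close>,
  \<open>X\<^sub>t = -eS\<^sup>2X\<close>, \<open>Xb\<^sub>t = eSb\<^sup>2Xb\<close>), as produced by the product and inverse rules.\<close>
abbreviation "M_dx \<equiv> - (matrix_inv Xb ** (- (Sb ** Xb)) ** matrix_inv Xb) - Kb ** (- (S ** X)) ** K"
abbreviation "M_dt e \<equiv> - (matrix_inv Xb ** (cscale e (Sb ** Sb) ** Xb) ** matrix_inv Xb)
     - Kb ** (- (cscale e (S ** S) ** X)) ** K"

lemma M_dx_eq: "M_dx = Sb ** M + Vb ** Ub ** X ** K"
  by (simp add: hM matrix_ring_simps point_simps syl2_in_product flip: syl2)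

lemma M_dx_sandwich: "Mi ** M_dx ** Mi = Mi ** Sb + Mi ** Vb ** Ub ** X ** K ** Mi"
  unfolding M_dx_eq by (simp add: matrix_ring_simps point_simps)

lemma M_dt_eq:
  "M_dt e = cscale e (Vb ** Ub ** S ** X ** K - Sb ** Vb ** Ub ** X ** K - Sb ** Sb ** M)"
  by (simp add: hM matrix_ring_simps point_simps syl2_in_product flip: syl2)

lemma M_dt_sandwich: "C ** Mi ** M_dt e ** Mi = cscale e (C ** Mi ** Vb ** Ub ** S ** X ** K ** Mi
    - C ** Mi ** Sb ** Vb ** Ub ** X ** K ** Mi - C ** Mi ** Sb ** Sb)"
  unfolding M_dt_eq by (simp add: matrix_ring_simps point_simps)

text \<open>The quadratic relation behind the cubic term of the NLS equation.\<close>
lemma sylvester_for_XKMi: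
  "S ** X ** K ** Mi + X ** K ** Mi ** Sb
    = Ni ** V ** U ** Mi - Ni ** K ** Xb ** Vb ** Ub ** X ** K ** Mi"
proof -
  let ?Y = "S ** X ** K ** Mi + X ** K ** Mi ** Sb"
  have "N ** ?Y = N ** X ** K ** Mi ** Sb + N ** S ** X ** K ** Mi" by (simp add: matrix_ring_simps)
  also have "\<dots> = K ** Xb ** Sb + N ** S ** X ** K ** Mi" by (simp add: resolvent_push point_simps)
  also have "N ** S ** X ** K = V ** U - K ** Xb ** Vb ** Ub ** X ** K - K ** Sb ** Xb ** M"
    by (simp add: hN hM matrix_ring_simps point_simps syl2_in_product flip: syl1 syl2)
  finally have "N ** ?Y = V ** U ** Mi - K ** Xb ** Vb ** Ub ** X ** K ** Mi"
    by (simp add: matrix_ring_simps point_simps)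
  hence "Ni ** (N ** ?Y) = Ni ** (V ** U ** Mi - K ** Xb ** Vb ** Ub ** X ** K ** Mi)" by simp
  thus ?thesis by (simp add: matrix_ring_simps point_simps)
qed

lemma cubic_term:
  "Ub ** S ** X ** K ** Mi ** Vb + Ub ** X ** K ** Mi ** Sb ** Vb
   + (Ub ** X ** K ** Mi ** Vb) ** (Ub ** X ** K ** Mi ** Vb) = (Ub ** Ni ** V) ** (U ** Mi ** Vb)"
proof -
  have "Ub ** S ** X ** K ** Mi ** Vb + Ub ** X ** K ** Mi ** Sb ** Vb
     = Ub ** (S ** X ** K ** Mi + X ** K ** Mi ** Sb) ** Vb" by (simp add: matrix_ring_simps)
  also have "\<dots> = Ub ** Ni ** V ** U ** Mi ** Vb - Ub ** Ni ** K ** Xb ** Vb ** Ub ** X ** K ** Mi ** Vb"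
    unfolding sylvester_for_XKMi by (simp add: matrix_ring_simps)
  also have "\<dots> = Ub ** Ni ** V ** U ** Mi ** Vb - Ub ** X ** K ** Mi ** Vb ** Ub ** X ** K ** Mi ** Vb"
    by (simp add: resolvent_inverse_push_in_product)
  finally show ?thesis by (simp add: matrix_mul_assoc algebra_simps)
qed

text \<open>\<open>q\<^sub>x = -U Mi M\<^sub>x Mi Vb\<close> in closed form; this is differentiated once more for \<open>q\<^sub>x\<^sub>x\<close>.\<close>
lemma q_dx_eq: "- (U ** Mi ** M_dx ** Mi ** Vb)
  = - (U ** Mi ** Sb ** Vb + U ** Mi ** Vb ** (Ub ** X ** K ** Mi ** Vb))"
  unfolding M_dx_eq by (simp add: matrix_ring_simps point_simps)

text \<open>The NLS equation for \<open>q\<close>, with \<open>q\<^sub>t\<close> and \<open>q\<^sub>x\<^sub>x\<close> written out as produced by differentiation.\<close>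
lemma continuous_q_equation:
  assumes ee: "e * e = -1"
  shows "cscale e (- (U ** Mi ** M_dt e ** Mi ** Vb))
    + (- (U ** (- (Mi ** M_dx ** Mi)) ** Sb ** Vb + U ** (- (Mi ** M_dx ** Mi)) ** Vb ** (Ub ** X ** K ** Mi ** Vb)
          + U ** Mi ** Vb ** (Ub ** (- (S ** X)) ** K ** Mi ** Vb
             + Ub ** X ** K ** (- (Mi ** M_dx ** Mi)) ** Vb)))
    - cscale 2 ((U ** Mi ** Vb) ** (Ub ** Ni ** V) ** (U ** Mi ** Vb)) = 0"
proof -
  have "cscale e (- (U ** Mi ** M_dt e ** Mi ** Vb))
    + (- (U ** (- (Mi ** M_dx ** Mi)) ** Sb ** Vb + U ** (- (Mi ** M_dx ** Mi)) ** Vb ** (Ub ** X ** K ** Mi ** Vb)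
          + U ** Mi ** Vb ** (Ub ** (- (S ** X)) ** K ** Mi ** Vb
             + Ub ** X ** K ** (- (Mi ** M_dx ** Mi)) ** Vb)))
    - cscale 2 ((U ** Mi ** Vb) ** (Ub ** Ni ** V) ** (U ** Mi ** Vb))
    = cscale 2 ((U ** Mi ** Vb) ** (Ub ** S ** X ** K ** Mi ** Vb + Ub ** X ** K ** Mi ** Sb ** Vb
   + (Ub ** X ** K ** Mi ** Vb) ** (Ub ** X ** K ** Mi ** Vb) - (Ub ** Ni ** V) ** (U ** Mi ** Vb)))"
    apply (simp only: M_dx_sandwich M_dt_sandwich)
    by (simp add: matrix_ring_simps ee square_eq_minus_one[OF ee] cscale_scalar_simps algebra_simps
        point_simps cscale_two)
  also have "\<dots> = 0" by (simp add: cubic_term)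
  finally show ?thesis .
qed

lemma Ni_expansion: "Ni = X + X ** K ** Mi ** Kb ** X"
proof -
  have "N ** (X + X ** K ** Mi ** Kb ** X) = mat 1"
    by (simp add: matrix_ring_simps resolvent_push point_simps) (simp add: hN hM matrix_ring_simps point_simps)
  hence "Ni ** (N ** (X + X ** K ** Mi ** Kb ** X)) = Ni" by simp
  thus ?thesis by (simp add: matrix_mul_assoc point_simps)
qed

text \<open>The equation \<open>p\<^sub>x = -q qb\<close>, with \<open>p = U Mi Kb X V\<close> differentiated.\<close>
lemma continuous_p_equation:
  "U ** (- (Mi ** M_dx ** Mi)) ** Kb ** X ** V + U ** Mi ** Kb ** (- (S ** X)) ** V
   = - ((U ** Mi ** Vb) ** (Ub ** Ni ** V))"
proof -
  have "U ** (- (Mi ** M_dx ** Mi)) ** Kb ** X ** V + U ** Mi ** Kb ** (- (S ** X)) ** V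
     = - (U ** Mi ** (Sb ** Kb + Kb ** S) ** X ** V) - U ** Mi ** Vb ** Ub ** X ** K ** Mi ** Kb ** X ** V"
    by (simp only: M_dx_sandwich) (simp add: matrix_ring_simps point_simps algebra_simps)
  also have "\<dots> = - (U ** Mi ** Vb ** Ub ** (X + X ** K ** Mi ** Kb ** X) ** V)"
    by (simp add: matrix_ring_simps syl2_in_product)
  also have "\<dots> = - ((U ** Mi ** Vb) ** (Ub ** Ni ** V))"
    by (simp add: Ni_expansion[symmetric] matrix_mul_assoc)
  finally show ?thesis .
qed

end

section \<open>Families of phase matrices: the equations for \<open>q\<close> and \<open>p\<close>\<close>

text \<open>The solution formulas are symmetric under exchanging the two halves of the data, which
  maps \<open>q, p\<close> to \<open>qb, pb\<close>.  Hence it suffices to derive the equations for \<open>q\<close> and \<open>p\<close> from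
  hypotheses invariant under this exchange together with \<open>e \<mapsto> -e\<close>.  (Two of the
  exchange rules below are inverse to each other, so they must be used instantiated.)\<close>

lemma qsol_swap: "qsol Ub V Kb K Xib Xi = qbsol Ub V K Kb Xi Xib"
  by (simp add: qsol_def qbsol_def)
lemma qbsol_swap: "qbsol U Vb Kb K Xib Xi = qsol U Vb K Kb Xi Xib"
  by (simp add: qsol_def qbsol_def)
lemma psol_swap: "psol Ub Vb Kb K Xib Xi = pbsol Ub Vb K Kb Xi Xib"
  by (simp add: psol_def pbsol_def)
lemma pbsol_swap: "pbsol U V Kb K Xib Xi = psol U V K Kb Xi Xib"
  by (simp add: psol_def pbsol_def)

lemma regular_swap: "regular Kb K Xib Xi \<longleftrightarrow> regular K Kb Xi Xib"
  by (auto simp: regular_def)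

locale continuous_family = ph: continuous_phase S X e + phb: continuous_phase Sb Xb "- e"
  for S :: "complex^'n1::finite^'n1" and X and Sb :: "complex^'n2::finite^'n2" and Xb and e +
  fixes U :: "complex^'n2^'m1::finite" and Ub :: "complex^'n1^'m2::finite"
    and V :: "complex^'m1^'n1" and Vb :: "complex^'m2^'n2"
    and K :: "complex^'n2^'n1" and Kb :: "complex^'n1^'n2"
  assumes syl1: "S ** K + K ** Sb = V ** U"
    and syl2: "Sb ** Kb + Kb ** S = Vb ** Ub"
    and ee: "e * e = -1"
begin

definition "M_at y t = matrix_inv (Xb y t) - Kb ** X y t ** K"
definition "N_at y t = matrix_inv (X y t) - K ** Xb y t ** Kb"

abbreviation "fq y t \<equiv> qsol U Vb K Kb (X y t) (Xb y t)"
abbreviation "fqb y t \<equiv> qbsol Ub V K Kb (X y t) (Xb y t)"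
abbreviation "fp y t \<equiv> psol U V K Kb (X y t) (Xb y t)"

lemma fq_eq: "fq y t = U ** matrix_inv (M_at y t) ** Vb" by (simp add: qsol_def M_at_def)
lemma fqb_eq: "fqb y t = Ub ** matrix_inv (N_at y t) ** V" by (simp add: qbsol_def N_at_def)
lemma fp_eq: "fp y t = U ** Xb y t ** Kb ** matrix_inv (N_at y t) ** V" by (simp add: psol_def N_at_def)

lemma regular_iff: "regular K Kb (X y t) (Xb y t) \<longleftrightarrow> invertible (M_at y t) \<and> invertible (N_at y t)"
  by (simp add: regular_def M_at_def N_at_def ph.invertible_phase phb.invertible_phase)

lemma continuous_point_at:
  assumes "invertible (M_at y t)" "invertible (N_at y t)"
  shows "continuous_point U Ub V Vb S Sb K Kb (X y t) (Xb y t)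
    (M_at y t) (matrix_inv (M_at y t)) (N_at y t) (matrix_inv (N_at y t))"
  using assms by unfold_locales (simp_all add: syl1 syl2 ph.invertible_phase phb.invertible_phase
      ph.commute_phase phb.commute_phase M_at_def N_at_def matrix_inv_right matrix_inv_left)

lemma dt_phase_bar: "((\<lambda>t. Xb y t) has_vector_derivative (cscale e (Sb ** Sb) ** Xb y t)) (at t)"
  using phb.dt_phase[of y t] by (simp add: cscale_minus_scalar matrix_neg_left)

lemma M_has_dx: "((\<lambda>y. M_at y t) has_vector_derivative
    (- (matrix_inv (Xb y t) ** (- (Sb ** Xb y t)) ** matrix_inv (Xb y t)) - Kb ** (- (S ** X y t)) ** K)) (at y)"
  unfolding M_at_def
  by (intro has_vector_derivative_diff has_vector_derivative_matrix_inv phb.dx_phase phb.invertible_phase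
      has_vector_derivative_matrix_mult_right has_vector_derivative_matrix_mult_left ph.dx_phase)

lemma N_has_dx: "((\<lambda>y. N_at y t) has_vector_derivative
    (- (matrix_inv (X y t) ** (- (S ** X y t)) ** matrix_inv (X y t)) - K ** (- (Sb ** Xb y t)) ** Kb)) (at y)"
  unfolding N_at_def
  by (intro has_vector_derivative_diff has_vector_derivative_matrix_inv ph.dx_phase ph.invertible_phase
      has_vector_derivative_matrix_mult_right has_vector_derivative_matrix_mult_left phb.dx_phase)

lemma M_has_dt: "((\<lambda>t. M_at y t) has_vector_derivative
    (- (matrix_inv (Xb y t) ** (cscale e (Sb ** Sb) ** Xb y t) ** matrix_inv (Xb y t))
     - Kb ** (- (cscale e (S ** S) ** X y t)) ** K)) (at t)"
  unfolding M_at_def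
  by (intro has_vector_derivative_diff has_vector_derivative_matrix_inv dt_phase_bar phb.invertible_phase
      has_vector_derivative_matrix_mult_right has_vector_derivative_matrix_mult_left ph.dt_phase)

text \<open>Regularity is an open condition in \<open>x\<close>, so identities valid at regular points can be
  differentiated.\<close>
lemma eventually_regular:
  assumes "invertible (M_at x t)" "invertible (N_at x t)"
  shows "eventually (\<lambda>y. invertible (M_at y t) \<and> invertible (N_at y t)) (nhds x)"
proof -
  have "eventually (\<lambda>y. det (M_at y t) \<noteq> 0) (nhds x)" "eventually (\<lambda>y. det (N_at y t) \<noteq> 0) (nhds x)"
    using eventually_invertible[OF differentiableI_vector[OF M_has_dx] assms(1)]
      eventually_invertible[OF differentiableI_vector[OF N_has_dx] assms(2)] .
  thus ?thesis by (simp add: eventually_conj_iff invertible_det_nz)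
qed

abbreviation "Mi y t \<equiv> matrix_inv (M_at y t)"
abbreviation "Ni y t \<equiv> matrix_inv (N_at y t)"
abbreviation "Mx y t \<equiv> - (matrix_inv (Xb y t) ** (- (Sb ** Xb y t)) ** matrix_inv (Xb y t))
  - Kb ** (- (S ** X y t)) ** K"
abbreviation "Mt y t \<equiv> - (matrix_inv (Xb y t) ** (cscale e (Sb ** Sb) ** Xb y t) ** matrix_inv (Xb y t))
  - Kb ** (- (cscale e (S ** S) ** X y t)) ** K"
abbreviation "Fq y t \<equiv> - (U ** Mi y t ** Sb ** Vb + U ** Mi y t ** Vb ** (Ub ** X y t ** K ** Mi y t ** Vb))"

lemma Mi_has_dx: "invertible (M_at y t) \<Longrightarrow>
  ((\<lambda>y. Mi y t) has_vector_derivative - (Mi y t ** Mx y t ** Mi y t)) (at y)"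
  by (rule has_vector_derivative_matrix_inv[OF M_has_dx])

lemma q_has_dx: "invertible (M_at y t) \<Longrightarrow>
  ((\<lambda>y. fq y t) has_vector_derivative - (U ** Mi y t ** Mx y t ** Mi y t ** Vb)) (at y)"
  unfolding fq_eq
  by (rule has_vector_derivative_eq_rhs[OF has_vector_derivative_matrix_mult_right[OF
          has_vector_derivative_matrix_mult_left[OF Mi_has_dx]]]) (simp_all add: matrix_ring_simps)

lemma q_has_dt: "invertible (M_at y t) \<Longrightarrow>
  ((\<lambda>t. fq y t) has_vector_derivative - (U ** Mi y t ** Mt y t ** Mi y t ** Vb)) (at t)"
  unfolding fq_eq
  by (rule has_vector_derivative_eq_rhs[OF has_vector_derivative_matrix_mult_right[OF
          has_vector_derivative_matrix_mult_left[OF has_vector_derivative_matrix_inv[OF M_has_dt]]]])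
    (simp_all add: matrix_ring_simps)

lemma dx_q: assumes "invertible (M_at y t)" "invertible (N_at y t)" shows "dx fq y t = Fq y t"
proof -
  interpret c: continuous_point U Ub V Vb S Sb K Kb "X y t" "Xb y t" "M_at y t" "Mi y t" "N_at y t" "Ni y t"
    by (rule continuous_point_at[OF assms])
  show ?thesis unfolding dx_def using vector_derivative_at[OF q_has_dx[OF assms(1)]] c.q_dx_eq by simp
qed

lemma Fq_has_dx: assumes "invertible (M_at x t)"
  shows "((\<lambda>y. Fq y t) has_vector_derivative
    - (U ** (- (Mi x t ** Mx x t ** Mi x t)) ** Sb ** Vb
       + U ** (- (Mi x t ** Mx x t ** Mi x t)) ** Vb ** (Ub ** X x t ** K ** Mi x t ** Vb)
       + U ** Mi x t ** Vb ** (Ub ** (- (S ** X x t)) ** K ** Mi x t ** Vb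
          + Ub ** X x t ** K ** (- (Mi x t ** Mx x t ** Mi x t)) ** Vb))) (at x)"
proof -
  note dMi = Mi_has_dx[OF assms]
  note mult_left = has_vector_derivative_matrix_mult_left
    and mult_right = has_vector_derivative_matrix_mult_right
  have a: "((\<lambda>y. U ** Mi y t ** Sb ** Vb) has_vector_derivative
      U ** (- (Mi x t ** Mx x t ** Mi x t)) ** Sb ** Vb) (at x)"
    by (intro mult_right mult_left dMi)
  have b1: "((\<lambda>y. U ** Mi y t ** Vb) has_vector_derivative U ** (- (Mi x t ** Mx x t ** Mi x t)) ** Vb) (at x)"
    by (intro mult_right mult_left dMi)
  have b2: "((\<lambda>y. Ub ** X y t ** K ** Mi y t ** Vb) has_vector_derivative
       Ub ** (- (S ** X x t)) ** K ** Mi x t ** Vb + Ub ** X x t ** K ** (- (Mi x t ** Mx x t ** Mi x t)) ** Vb) (at x)"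
    by (rule has_vector_derivative_eq_rhs[OF mult_right[OF has_vector_derivative_matrix_mult[OF
            mult_right[OF mult_left[OF ph.dx_phase]] dMi]]])
      (simp add: matrix_ring_simps algebra_simps)
  have b: "((\<lambda>y. U ** Mi y t ** Vb ** (Ub ** X y t ** K ** Mi y t ** Vb)) has_vector_derivative
      U ** (- (Mi x t ** Mx x t ** Mi x t)) ** Vb ** (Ub ** X x t ** K ** Mi x t ** Vb)
      + U ** Mi x t ** Vb ** (Ub ** (- (S ** X x t)) ** K ** Mi x t ** Vb
        + Ub ** X x t ** K ** (- (Mi x t ** Mx x t ** Mi x t)) ** Vb)) (at x)"
    by (rule has_vector_derivative_eq_rhs[OF has_vector_derivative_matrix_mult[OF b1 b2]])
      (simp add: algebra_simps)
  show ?thesis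
    by (rule has_vector_derivative_eq_rhs[OF has_vector_derivative_minus[OF has_vector_derivative_add[OF a b]]])
      (simp add: algebra_simps)
qed

text \<open>Since \<open>q\<^sub>x = Fq\<close> near a regular point, \<open>q\<^sub>x\<^sub>x\<close> is the derivative of \<open>Fq\<close>.\<close>
lemma dx_q_has_dx: assumes "invertible (M_at x t)" "invertible (N_at x t)"
  shows "((\<lambda>y. dx fq y t) has_vector_derivative
    - (U ** (- (Mi x t ** Mx x t ** Mi x t)) ** Sb ** Vb
       + U ** (- (Mi x t ** Mx x t ** Mi x t)) ** Vb ** (Ub ** X x t ** K ** Mi x t ** Vb)
       + U ** Mi x t ** Vb ** (Ub ** (- (S ** X x t)) ** K ** Mi x t ** Vb
          + Ub ** X x t ** K ** (- (Mi x t ** Mx x t ** Mi x t)) ** Vb))) (at x)"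
proof -
  have ev: "eventually (\<lambda>y. dx fq y t = Fq y t) (nhds x)"
    using eventually_regular[OF assms] by (rule eventually_mono) (simp add: dx_q)
  show ?thesis
    using has_vector_derivative_cong_ev[where f="\<lambda>y. dx fq y t" and g="\<lambda>y. Fq y t" and x=x and S=UNIV]
      Fq_has_dx[OF assms(1)] ev eventually_nhds_x_imp_x[OF ev]
    by (simp add: eventually_mono)
qed

text \<open>Near a regular point \<open>p = U Mi Kb X V\<close>, which is differentiated for \<open>p\<^sub>x = -q qb\<close>.\<close>
lemma p_has_dx: assumes "invertible (M_at x t)" "invertible (N_at x t)"
  shows "((\<lambda>y. fp y t) has_vector_derivative - (fq x t ** fqb x t)) (at x)"
proof -
  interpret c: continuous_point U Ub V Vb S Sb K Kb "X x t" "Xb x t" "M_at x t" "Mi x t" "N_at x t" "Ni x t"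
    by (rule continuous_point_at[OF assms])
  have ev: "eventually (\<lambda>y. fp y t = U ** Mi y t ** Kb ** X y t ** V) (nhds x)"
    using eventually_regular[OF assms]
  proof (rule eventually_mono)
    fix y assume "invertible (M_at y t) \<and> invertible (N_at y t)"
    then interpret c': continuous_point U Ub V Vb S Sb K Kb "X y t" "Xb y t" "M_at y t" "Mi y t"
      "N_at y t" "Ni y t"
      using continuous_point_at by blast
    show "fp y t = U ** Mi y t ** Kb ** X y t ** V" unfolding fp_eq by (rule c'.p_alt)
  qed
  have "((\<lambda>y. U ** Mi y t ** Kb ** X y t ** V) has_vector_derivative
      U ** (- (Mi x t ** Mx x t ** Mi x t)) ** Kb ** X x t ** V + U ** Mi x t ** Kb ** (- (S ** X x t)) ** V) (at x)"
    by (rule has_vector_derivative_eq_rhs[OF has_vector_derivative_matrix_mult_right[OF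
            has_vector_derivative_matrix_mult[OF has_vector_derivative_matrix_mult_right[OF
              has_vector_derivative_matrix_mult_left[OF Mi_has_dx[OF assms(1)]]] ph.dx_phase]]])
      (simp add: matrix_ring_simps algebra_simps)
  hence "((\<lambda>y. fp y t) has_vector_derivative
      U ** (- (Mi x t ** Mx x t ** Mi x t)) ** Kb ** X x t ** V + U ** Mi x t ** Kb ** (- (S ** X x t)) ** V) (at x)"
    using has_vector_derivative_cong_ev[where f="\<lambda>y. fp y t" and g="\<lambda>y. U ** Mi y t ** Kb ** X y t ** V"
        and x=x and S=UNIV] ev eventually_nhds_x_imp_x[OF ev]
    by (simp add: eventually_mono)
  thus ?thesis unfolding c.continuous_p_equation fq_eq fqb_eq .
qed

theorem continuous_q_p_equations:
  assumes "regular K Kb (X x t) (Xb x t)"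
  shows "(\<lambda>y. fq y t) differentiable (at x) \<and> (\<lambda>y. dx fq y t) differentiable (at x)
    \<and> (\<lambda>s. fq x s) differentiable (at t) \<and> (\<lambda>y. fp y t) differentiable (at x)
    \<and> cscale e (dt fq x t) + dx (dx fq) x t - cscale 2 (fq x t ** fqb x t ** fq x t) = 0
    \<and> dx fp x t = - (fq x t ** fqb x t)"
proof (intro conjI)
  have reg: "invertible (M_at x t)" "invertible (N_at x t)" using assms regular_iff by auto
  interpret c: continuous_point U Ub V Vb S Sb K Kb "X x t" "Xb x t" "M_at x t" "Mi x t" "N_at x t" "Ni x t"
    by (rule continuous_point_at[OF reg])
  show "(\<lambda>y. fq y t) differentiable (at x)" using q_has_dx[OF reg(1)] by (rule differentiableI_vector)
  show "(\<lambda>y. dx fq y t) differentiable (at x)" using dx_q_has_dx[OF reg] by (rule differentiableI_vector)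
  show "(\<lambda>s. fq x s) differentiable (at t)" using q_has_dt[OF reg(1)] by (rule differentiableI_vector)
  show "(\<lambda>y. fp y t) differentiable (at x)" using p_has_dx[OF reg] by (rule differentiableI_vector)
  show "dx fp x t = - (fq x t ** fqb x t)" unfolding dx_def using vector_derivative_at[OF p_has_dx[OF reg]] .
  have "dt fq x t = - (U ** Mi x t ** Mt x t ** Mi x t ** Vb)"
    unfolding dt_def using vector_derivative_at[OF q_has_dt[OF reg(1)]] .
  moreover have "dx (dx fq) x t = - (U ** (- (Mi x t ** Mx x t ** Mi x t)) ** Sb ** Vb
       + U ** (- (Mi x t ** Mx x t ** Mi x t)) ** Vb ** (Ub ** X x t ** K ** Mi x t ** Vb)
       + U ** Mi x t ** Vb ** (Ub ** (- (S ** X x t)) ** K ** Mi x t ** Vb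
          + Ub ** X x t ** K ** (- (Mi x t ** Mx x t ** Mi x t)) ** Vb))"
    unfolding dx_def[of "dx fq"] using vector_derivative_at[OF dx_q_has_dx[OF reg]] by simp
  ultimately show "cscale e (dt fq x t) + dx (dx fq) x t - cscale 2 (fq x t ** fqb x t ** fq x t) = 0"
    unfolding fq_eq fqb_eq using c.continuous_q_equation[OF ee] by (simp add: matrix_mul_assoc)
qed

end

locale semidiscrete_family = ph: semidiscrete_phase S X e + phb: semidiscrete_phase Sb Xb "- e"
  for S :: "complex^'n1::finite^'n1" and X and Sb :: "complex^'n2::finite^'n2" and Xb and e +
  fixes U :: "complex^'n2^'m1::finite" and Ub :: "complex^'n1^'m2::finite"
    and V :: "complex^'m1^'n1" and Vb :: "complex^'m2^'n2"
    and K :: "complex^'n2^'n1" and Kb :: "complex^'n1^'n2"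
  assumes syl1: "matrix_inv S ** K - K ** Sb = V ** U"
    and syl2: "matrix_inv Sb ** Kb - Kb ** S = Vb ** Ub"
    and ee: "e * e = -1"
begin

abbreviation "fq y t \<equiv> qsol U Vb K Kb (X y t) (Xb y t)"
abbreviation "fqb y t \<equiv> qbsol Ub V K Kb (X y t) (Xb y t)"
abbreviation "fp y t \<equiv> psol U V K Kb (X y t) (Xb y t)"
abbreviation "M_at y t \<equiv> matrix_inv (Xb y t) - Kb ** X y t ** K"
abbreviation "N_at y t \<equiv> matrix_inv (X y t) - K ** Xb y t ** Kb"

lemma lattice_step_at:
  "regular K Kb (X x t) (Xb x t) \<Longrightarrow> regular K Kb (X (x + 1) t) (Xb (x + 1) t) \<Longrightarrow>
  lattice_step U Ub V Vb S Sb K Kb (X x t) (Xb x t) (M_at x t) (matrix_inv (M_at x t))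
    (N_at x t) (matrix_inv (N_at x t))
    (X (x + 1) t) (Xb (x + 1) t) (M_at (x + 1) t) (matrix_inv (M_at (x + 1) t))
    (N_at (x + 1) t) (matrix_inv (N_at (x + 1) t))"
  unfolding lattice_step_def lattice_step_axioms_def
  using discrete_point_intro[OF ph.invertible_S phb.invertible_S syl1 syl2 ph.invertible_phase
      phb.invertible_phase ph.commute_phase phb.commute_phase] ph.shift_phase phb.shift_phase
  by blast

lemma M_has_dt: "((\<lambda>t. M_at y t) has_vector_derivative
    (- (matrix_inv (Xb y t) ** (cscale e (omega Sb) ** Xb y t) ** matrix_inv (Xb y t))
     - Kb ** (- (cscale e (omega S) ** X y t)) ** K)) (at t)"
proof -
  have dt_bar: "((\<lambda>t. Xb y t) has_vector_derivative cscale e (omega Sb) ** Xb y t) (at t)"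
    using phb.dt_phase[of y t] by (simp add: cscale_minus_scalar matrix_neg_left)
  show ?thesis
    by (intro has_vector_derivative_diff has_vector_derivative_matrix_inv dt_bar phb.invertible_phase
        has_vector_derivative_matrix_mult_right has_vector_derivative_matrix_mult_left ph.dt_phase)
qed

lemma q_has_dt: "invertible (M_at y t) \<Longrightarrow> ((\<lambda>t. fq y t) has_vector_derivative
   - (U ** matrix_inv (M_at y t) ** (- (matrix_inv (Xb y t) ** (cscale e (omega Sb) ** Xb y t)
       ** matrix_inv (Xb y t)) - Kb ** (- (cscale e (omega S) ** X y t)) ** K)
     ** matrix_inv (M_at y t) ** Vb)) (at t)"
  unfolding qsol_def
  by (rule has_vector_derivative_eq_rhs[OF has_vector_derivative_matrix_mult_right[OF
          has_vector_derivative_matrix_mult_left[OF has_vector_derivative_matrix_inv[OF M_has_dt]]]])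
    (simp_all add: matrix_ring_simps)

theorem semidiscrete_q_p_equations:
  assumes r0: "regular K Kb (X (x - 1) t) (Xb (x - 1) t)" and r1: "regular K Kb (X x t) (Xb x t)"
    and r2: "regular K Kb (X (x + 1) t) (Xb (x + 1) t)"
  shows "(\<lambda>s. fq x s) differentiable (at t)
    \<and> cscale e (dt fq x t) + fq (x + 1) t - cscale 2 (fq x t) + fq (x - 1) t
       - fq (x + 1) t ** fqb x t ** fq x t - fq x t ** fqb x t ** fq (x - 1) t = 0
    \<and> fp (x + 1) t - fp x t = - (fq (x + 1) t ** fqb x t)"
proof (intro conjI)
  have iM: "invertible (M_at x t)" using r1 by (simp add: regular_def)
  interpret A: lattice_step U Ub V Vb S Sb K Kb "X (x - 1) t" "Xb (x - 1) t" "M_at (x - 1) t"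
    "matrix_inv (M_at (x - 1) t)" "N_at (x - 1) t" "matrix_inv (N_at (x - 1) t)"
    "X x t" "Xb x t" "M_at x t" "matrix_inv (M_at x t)" "N_at x t" "matrix_inv (N_at x t)"
    using lattice_step_at[OF r0] r1 by simp
  interpret B: lattice_step U Ub V Vb S Sb K Kb "X x t" "Xb x t" "M_at x t" "matrix_inv (M_at x t)"
    "N_at x t" "matrix_inv (N_at x t)" "X (x + 1) t" "Xb (x + 1) t" "M_at (x + 1) t"
    "matrix_inv (M_at (x + 1) t)" "N_at (x + 1) t" "matrix_inv (N_at (x + 1) t)"
    by (rule lattice_step_at[OF r1 r2])
  show "(\<lambda>s. fq x s) differentiable (at t)" using q_has_dt[OF iM] by (rule differentiableI_vector)
  have "dt fq x t = - (U ** matrix_inv (M_at x t) ** (- (matrix_inv (Xb x t) ** (cscale e (omega Sb)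
      ** Xb x t) ** matrix_inv (Xb x t)) - Kb ** (- (cscale e (omega S) ** X x t)) ** K)
      ** matrix_inv (M_at x t) ** Vb)"
    unfolding dt_def using vector_derivative_at[OF q_has_dt[OF iM]] .
  from A.p1.semidiscrete_q_equation[OF ee B.q_next_backward A.q_next_forward this]
  show "cscale e (dt fq x t) + fq (x + 1) t - cscale 2 (fq x t) + fq (x - 1) t
       - fq (x + 1) t ** fqb x t ** fq x t - fq x t ** fqb x t ** fq (x - 1) t = 0"
    by (simp add: qsol_def qbsol_def)
  show "fp (x + 1) t - fp x t = - (fq (x + 1) t ** fqb x t)"
    using B.p_difference by (simp add: qsol_def qbsol_def psol_def matrix_mul_assoc)
qed

end

lemma time_step_numerator_identity:
  fixes S :: "complex^'n::finite^'n"
  assumes ee: "e * e = -1" and iS: "invertible S"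
  shows "(S - cscale (1 + e) (mat 1)) ** (mat 1 + cscale e (mat 1 - matrix_inv S))
    = (cscale (1 - e) (mat 1) - matrix_inv S) ** (mat 1 - cscale e (mat 1 - S))"
  by (simp add: matrix_ring_simps cscale_scalar_simps matrix_inv_right[OF iS] matrix_inv_left[OF iS]
      ee square_eq_minus_one[OF ee] algebra_simps)

lemma time_step_numerator_identity':
  fixes S :: "complex^'n::finite^'n"
  assumes ee: "e * e = -1" and iS: "invertible S"
  shows "(cscale (1 + e) (mat 1) - matrix_inv S) ** (mat 1 + cscale e (mat 1 - S))
    = (S + cscale (e - 1) (mat 1)) ** (mat 1 - cscale e (mat 1 - matrix_inv S))"
  by (simp add: matrix_ring_simps cscale_scalar_simps matrix_inv_right[OF iS] matrix_inv_left[OF iS]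
      ee square_eq_minus_one[OF ee] algebra_simps)

lemma time_step_relation:
  fixes S X :: "complex^'n::finite^'n"
  assumes ee: "e * e = -1" and iS: "invertible S" and iW: "invertible (mat 1 - cscale e (mat 1 - S))"
    and cX: "S ** X = X ** S" and hXT: "XT = time_step e S ** X"
  shows "S ** XT = cscale (1 + e) XT + cscale (1 - e) X - X ** matrix_inv S"
proof -
  have a: "(S - cscale (1 + e) (mat 1)) ** time_step e S = cscale (1 - e) (mat 1) - matrix_inv S"
  proof -
    have "(S - cscale (1 + e) (mat 1)) ** time_step e S
      = (S - cscale (1 + e) (mat 1)) ** (mat 1 + cscale e (mat 1 - matrix_inv S))
        ** matrix_inv (mat 1 - cscale e (mat 1 - S))" by (simp add: time_step_def matrix_mul_assoc)
    also have "\<dots> = (cscale (1 - e) (mat 1) - matrix_inv S) ** (mat 1 - cscale e (mat 1 - S))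
        ** matrix_inv (mat 1 - cscale e (mat 1 - S))"
      by (simp only: time_step_numerator_identity[OF ee iS])
    also have "\<dots> = cscale (1 - e) (mat 1) - matrix_inv S" by (simp only: matrix_inv_cancel_right[OF iW])
    finally show ?thesis .
  qed
  have "S ** XT - cscale (1 + e) XT = (S - cscale (1 + e) (mat 1)) ** time_step e S ** X"
    by (simp add: hXT matrix_ring_simps)
  also have "\<dots> = cscale (1 - e) X - X ** matrix_inv S"
    unfolding a using matrix_inv_commute[OF iS cX] by (simp add: matrix_ring_simps)
  finally show ?thesis by (simp add: algebra_simps)
qed

lemma time_step_relation_inverse:
  fixes S X :: "complex^'n::finite^'n"
  assumes ee: "e * e = -1" and iS: "invertible S" and iX: "invertible X"
    and iW: "invertible (mat 1 - cscale (- e) (mat 1 - S))" and iO: "invertible (time_step (- e) S)"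
    and cX: "S ** X = X ** S" and hXT: "XT = time_step (- e) S ** X"
  shows "matrix_inv S ** matrix_inv XT
    = cscale (1 + e) (matrix_inv XT) - matrix_inv X ** S - cscale (e - 1) (matrix_inv X)"
proof -
  let ?W = "mat 1 - cscale (- e) (mat 1 - S)" and ?P = "mat 1 + cscale (- e) (mat 1 - matrix_inv S)"
  have PW: "?P = time_step (- e) S ** ?W" by (simp only: time_step_def matrix_inv_cancel_left[OF iW])
  have iP: "invertible ?P" unfolding PW by (rule invertible_mult[OF iO iW])
  have inv_step: "matrix_inv (time_step (- e) S) = ?W ** matrix_inv ?P"
    unfolding time_step_def
    by (simp add: matrix_inv_mult[OF iP invertible_matrix_inv[OF iW]] matrix_inv_inv[OF iW])
  have p2: "(cscale (1 + e) (mat 1) - matrix_inv S) ** ?W = (S + cscale (e - 1) (mat 1)) ** ?P"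
    using time_step_numerator_identity'[OF ee iS] by (simp add: cscale_minus_scalar algebra_simps)
  have a: "(cscale (1 + e) (mat 1) - matrix_inv S) ** matrix_inv (time_step (- e) S)
    = S + cscale (e - 1) (mat 1)"
  proof -
    have "(cscale (1 + e) (mat 1) - matrix_inv S) ** (?W ** matrix_inv ?P)
      = (cscale (1 + e) (mat 1) - matrix_inv S) ** ?W ** matrix_inv ?P"
      by (simp only: matrix_mul_assoc)
    also have "\<dots> = (S + cscale (e - 1) (mat 1)) ** ?P ** matrix_inv ?P" by (simp only: p2)
    also have "\<dots> = S + cscale (e - 1) (mat 1)" by (simp only: matrix_inv_cancel_right[OF iP])
    finally show ?thesis unfolding inv_step .
  qed
  have iXT: "matrix_inv XT = matrix_inv X ** matrix_inv (time_step (- e) S)"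
    unfolding hXT by (rule matrix_inv_mult[OF iO iX])
  note c = commute_with_inverses[OF iS iX cX]
  have "cscale (1 + e) (matrix_inv XT) - matrix_inv S ** matrix_inv XT
      = (cscale (1 + e) (mat 1) - matrix_inv S) ** matrix_inv XT" by (simp add: matrix_ring_simps)
  also have "\<dots> = matrix_inv X ** ((cscale (1 + e) (mat 1) - matrix_inv S) ** matrix_inv (time_step (- e) S))"
    unfolding iXT by (simp add: matrix_ring_simps c(4))
  also have "\<dots> = matrix_inv X ** S + cscale (e - 1) (matrix_inv X)" unfolding a by (simp add: matrix_ring_simps)
  finally show ?thesis using c(3) by (simp add: algebra_simps)
qed

locale fully_discrete_family = ph: discrete_phase S X e + phb: discrete_phase Sb Xb "- e"
  for S :: "complex^'n1::finite^'n1" and X and Sb :: "complex^'n2::finite^'n2" and Xb and e +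
  fixes U :: "complex^'n2^'m1::finite" and Ub :: "complex^'n1^'m2::finite"
    and V :: "complex^'m1^'n1" and Vb :: "complex^'m2^'n2"
    and K :: "complex^'n2^'n1" and Kb :: "complex^'n1^'n2"
  assumes syl1: "matrix_inv S ** K - K ** Sb = V ** U"
    and syl2: "matrix_inv Sb ** Kb - Kb ** S = Vb ** Ub"
    and ee: "e * e = -1"
begin

abbreviation "fq y t \<equiv> qsol U Vb K Kb (X y t) (Xb y t)"
abbreviation "fqb y t \<equiv> qbsol Ub V K Kb (X y t) (Xb y t)"
abbreviation "fp y t \<equiv> psol U V K Kb (X y t) (Xb y t)"
abbreviation "fpb y t \<equiv> pbsol Ub Vb K Kb (X y t) (Xb y t)"
abbreviation "M_at y t \<equiv> matrix_inv (Xb y t) - Kb ** X y t ** K"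
abbreviation "N_at y t \<equiv> matrix_inv (X y t) - K ** Xb y t ** Kb"

lemma discrete_point_at:
  "regular K Kb (X x t) (Xb x t) \<Longrightarrow> discrete_point U Ub V Vb S Sb K Kb (X x t) (Xb x t)
    (M_at x t) (matrix_inv (M_at x t)) (N_at x t) (matrix_inv (N_at x t))"
  by (rule discrete_point_intro[OF ph.invertible_S phb.invertible_S syl1 syl2 ph.invertible_phase
        phb.invertible_phase ph.commute_phase phb.commute_phase])

lemma lattice_step_at:
  "regular K Kb (X x t) (Xb x t) \<Longrightarrow> regular K Kb (X (x + 1) t) (Xb (x + 1) t) \<Longrightarrow>
  lattice_step U Ub V Vb S Sb K Kb (X x t) (Xb x t) (M_at x t) (matrix_inv (M_at x t))
    (N_at x t) (matrix_inv (N_at x t))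
    (X (x + 1) t) (Xb (x + 1) t) (M_at (x + 1) t) (matrix_inv (M_at (x + 1) t))
    (N_at (x + 1) t) (matrix_inv (N_at (x + 1) t))"
  unfolding lattice_step_def lattice_step_axioms_def
  using discrete_point_at ph.shift_phase phb.shift_phase by blast

lemma time_step_pair_at:
  "regular K Kb (X x t) (Xb x t) \<Longrightarrow> regular K Kb (X x (t + 1)) (Xb x (t + 1)) \<Longrightarrow>
  time_step_pair U Ub V Vb S Sb K Kb (X x t) (Xb x t) (M_at x t) (matrix_inv (M_at x t))
    (N_at x t) (matrix_inv (N_at x t))
    (X x (t + 1)) (Xb x (t + 1)) (M_at x (t + 1)) (matrix_inv (M_at x (t + 1)))
    (N_at x (t + 1)) (matrix_inv (N_at x (t + 1))) e"
  unfolding time_step_pair_def time_step_pair_axioms_def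
  using discrete_point_at
    time_step_relation[OF ee ph.invertible_S ph.invertible_denominator ph.commute_phase ph.step_phase]
    time_step_relation_inverse[OF ee phb.invertible_S phb.invertible_phase phb.invertible_denominator
      phb.invertible_time_step phb.commute_phase phb.step_phase]
  by blast

theorem fully_discrete_q_p_equations:
  assumes r0: "regular K Kb (X (x - 1) t) (Xb (x - 1) t)" and r1: "regular K Kb (X x t) (Xb x t)"
    and r2: "regular K Kb (X (x + 1) t) (Xb (x + 1) t)"
    and r3: "regular K Kb (X x (t + 1)) (Xb x (t + 1))"
    and r4: "regular K Kb (X (x + 1) (t + 1)) (Xb (x + 1) (t + 1))"
  shows "cscale e (fq x (t + 1) - fq x t) + (fq (x + 1) (t + 1) - fq x (t + 1)) - (fq x t - fq (x - 1) t)
       - fq (x + 1) (t + 1) ** fqb x (t + 1) ** fq x (t + 1) - fq x t ** fqb x t ** fq (x - 1) t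
       + (fp x (t + 1) - fp x t) ** fq x (t + 1) + fq x t ** (fpb x (t + 1) - fpb x t) = 0
    \<and> fp (x + 1) t - fp x t = - (fq (x + 1) t ** fqb x t)"
proof
  interpret A: lattice_step U Ub V Vb S Sb K Kb "X (x - 1) t" "Xb (x - 1) t" "M_at (x - 1) t"
    "matrix_inv (M_at (x - 1) t)" "N_at (x - 1) t" "matrix_inv (N_at (x - 1) t)"
    "X x t" "Xb x t" "M_at x t" "matrix_inv (M_at x t)" "N_at x t" "matrix_inv (N_at x t)"
    using lattice_step_at[OF r0] r1 by simp
  interpret B: lattice_step U Ub V Vb S Sb K Kb "X x t" "Xb x t" "M_at x t" "matrix_inv (M_at x t)"
    "N_at x t" "matrix_inv (N_at x t)" "X (x + 1) t" "Xb (x + 1) t" "M_at (x + 1) t"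
    "matrix_inv (M_at (x + 1) t)" "N_at (x + 1) t" "matrix_inv (N_at (x + 1) t)"
    by (rule lattice_step_at[OF r1 r2])
  interpret C: lattice_step U Ub V Vb S Sb K Kb "X x (t + 1)" "Xb x (t + 1)" "M_at x (t + 1)"
    "matrix_inv (M_at x (t + 1))" "N_at x (t + 1)" "matrix_inv (N_at x (t + 1))"
    "X (x + 1) (t + 1)" "Xb (x + 1) (t + 1)" "M_at (x + 1) (t + 1)" "matrix_inv (M_at (x + 1) (t + 1))"
    "N_at (x + 1) (t + 1)" "matrix_inv (N_at (x + 1) (t + 1))"
    by (rule lattice_step_at[OF r3 r4])
  interpret T: time_step_pair U Ub V Vb S Sb K Kb "X x t" "Xb x t" "M_at x t" "matrix_inv (M_at x t)"
    "N_at x t" "matrix_inv (N_at x t)" "X x (t + 1)" "Xb x (t + 1)" "M_at x (t + 1)"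
    "matrix_inv (M_at x (t + 1))" "N_at x (t + 1)" "matrix_inv (N_at x (t + 1))" e
    by (rule time_step_pair_at[OF r1 r3])
  show "cscale e (fq x (t + 1) - fq x t) + (fq (x + 1) (t + 1) - fq x (t + 1)) - (fq x t - fq (x - 1) t)
       - fq (x + 1) (t + 1) ** fqb x (t + 1) ** fq x (t + 1) - fq x t ** fqb x t ** fq (x - 1) t
       + (fp x (t + 1) - fp x t) ** fq x (t + 1) + fq x t ** (fpb x (t + 1) - fpb x t) = 0"
    using T.fully_discrete_q_equation[OF C.q_next_backward A.q_next_forward]
    by (simp add: qsol_def qbsol_def psol_def pbsol_def matrix_mul_assoc)
  show "fp (x + 1) t - fp x t = - (fq (x + 1) t ** fqb x t)"
    using B.p_difference by (simp add: qsol_def qbsol_def psol_def matrix_mul_assoc)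
qed

end

text \<open>In each case the equations for \<open>q, p\<close> come from the family locale applied to the data,
  and those for \<open>qb, pb\<close> from the same locale applied to the swapped data with \<open>e = -\<i>\<close>.\<close>

theorem continuous_NLS_solution:
  fixes U :: "complex^'n2::finite^'m1::finite" and Ub :: "complex^'n1::finite^'m2::finite"
    and V :: "complex^'m1^'n1" and Vb :: "complex^'m2^'n2"
    and S :: "complex^'n1^'n1" and Sb :: "complex^'n2^'n2"
    and K :: "complex^'n2^'n1" and Kb :: "complex^'n1^'n2"
  assumes syl1: "S ** K + K ** Sb = V ** U" and syl2: "Sb ** Kb + Kb ** S = Vb ** Ub"
    and reg: "regular K Kb (XiC S x t) (XibC Sb x t)"
  shows "NLS_cont_at
          (\<lambda>x t. qsol U Vb K Kb (XiC S x t) (XibC Sb x t))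
          (\<lambda>x t. qbsol Ub V K Kb (XiC S x t) (XibC Sb x t))
          (\<lambda>x t. psol U V K Kb (XiC S x t) (XibC Sb x t))
          (\<lambda>x t. pbsol Ub Vb K Kb (XiC S x t) (XibC Sb x t)) x t"
proof -
  have phase: "continuous_phase S (XiC S) \<i>" "continuous_phase S (XiC S) (- (- \<i>))"
    using continuous_phase_XiC by simp_all
  interpret q: continuous_family S "XiC S" Sb "XibC Sb" \<i> U Ub V Vb K Kb
    by (intro continuous_family.intro phase continuous_phase_XibC continuous_family_axioms.intro
        syl1 syl2) simp
  interpret qb: continuous_family Sb "XibC Sb" S "XiC S" "- \<i>" Ub U Vb V Kb K
    by (intro continuous_family.intro phase continuous_phase_XibC continuous_family_axioms.intro
        syl1 syl2) simp
  note swap = qsol_swap[of Ub V Kb K] qbsol_swap[of U Vb Kb K] psol_swap[of Ub Vb Kb K]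
    pbsol_swap[of U V Kb K]
  show ?thesis
    using q.continuous_q_p_equations[OF reg] qb.continuous_q_p_equations[OF regular_swap[THEN iffD2, OF reg]]
    unfolding NLS_cont_at_def swap by (simp add: cscale_minus_scalar)
qed

theorem semidiscrete_NLS_solution:
  fixes U :: "complex^'n2::finite^'m1::finite" and Ub :: "complex^'n1::finite^'m2::finite"
    and V :: "complex^'m1^'n1" and Vb :: "complex^'m2^'n2"
    and S :: "complex^'n1^'n1" and Sb :: "complex^'n2^'n2"
    and K :: "complex^'n2^'n1" and Kb :: "complex^'n1^'n2"
  assumes iS: "invertible S" and iSb: "invertible Sb"
    and syl1: "matrix_inv S ** K - K ** Sb = V ** U" and syl2: "matrix_inv Sb ** Kb - Kb ** S = Vb ** Ub"
    and reg: "regular K Kb (XiS S (x - 1) t) (XibS Sb (x - 1) t)" "regular K Kb (XiS S x t) (XibS Sb x t)"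
      "regular K Kb (XiS S (x + 1) t) (XibS Sb (x + 1) t)"
  shows "NLS_semi_at
          (\<lambda>x t. qsol U Vb K Kb (XiS S x t) (XibS Sb x t))
          (\<lambda>x t. qbsol Ub V K Kb (XiS S x t) (XibS Sb x t))
          (\<lambda>x t. psol U V K Kb (XiS S x t) (XibS Sb x t))
          (\<lambda>x t. pbsol Ub Vb K Kb (XiS S x t) (XibS Sb x t)) x t"
proof -
  have phase: "semidiscrete_phase S (XiS S) \<i>" "semidiscrete_phase S (XiS S) (- (- \<i>))"
    using semidiscrete_phase_XiS[OF iS] by simp_all
  interpret q: semidiscrete_family S "XiS S" Sb "XibS Sb" \<i> U Ub V Vb K Kb
    by (intro semidiscrete_family.intro phase semidiscrete_phase_XibS[OF iSb]
        semidiscrete_family_axioms.intro syl1 syl2) simp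
  interpret qb: semidiscrete_family Sb "XibS Sb" S "XiS S" "- \<i>" Ub U Vb V Kb K
    by (intro semidiscrete_family.intro phase semidiscrete_phase_XibS[OF iSb]
        semidiscrete_family_axioms.intro syl1 syl2) simp
  note swap = qsol_swap[of Ub V Kb K] qbsol_swap[of U Vb Kb K] psol_swap[of Ub Vb Kb K]
    pbsol_swap[of U V Kb K]
  show ?thesis
    using q.semidiscrete_q_p_equations[OF reg] qb.semidiscrete_q_p_equations[of x t]
      reg regular_swap[of Kb K]
    unfolding NLS_semi_at_def swap by (simp add: cscale_minus_scalar)
qed

theorem fully_discrete_NLS_solution:
  fixes U :: "complex^'n2::finite^'m1::finite" and Ub :: "complex^'n1::finite^'m2::finite"
    and V :: "complex^'m1^'n1" and Vb :: "complex^'m2^'n2"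
    and S :: "complex^'n1^'n1" and Sb :: "complex^'n2^'n2"
    and K :: "complex^'n2^'n1" and Kb :: "complex^'n1^'n2"
  assumes iS: "invertible S" and iSb: "invertible Sb"
    and iW: "invertible (mat 1 - cscale \<i> (mat 1 - S))" and iWb: "invertible (mat 1 + cscale \<i> (mat 1 - Sb))"
    and iO: "invertible (Omega S)" and iOb: "invertible (Omegabar Sb)"
    and syl1: "matrix_inv S ** K - K ** Sb = V ** U" and syl2: "matrix_inv Sb ** Kb - Kb ** S = Vb ** Ub"
    and reg: "regular K Kb (XiF S (x - 1) t) (XibF Sb (x - 1) t)" "regular K Kb (XiF S x t) (XibF Sb x t)"
      "regular K Kb (XiF S (x + 1) t) (XibF Sb (x + 1) t)" "regular K Kb (XiF S x (t + 1)) (XibF Sb x (t + 1))"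
      "regular K Kb (XiF S (x + 1) (t + 1)) (XibF Sb (x + 1) (t + 1))"
  shows "NLS_full_at
          (\<lambda>x t. qsol U Vb K Kb (XiF S x t) (XibF Sb x t))
          (\<lambda>x t. qbsol Ub V K Kb (XiF S x t) (XibF Sb x t))
          (\<lambda>x t. psol U V K Kb (XiF S x t) (XibF Sb x t))
          (\<lambda>x t. pbsol Ub Vb K Kb (XiF S x t) (XibF Sb x t)) x t"
proof -
  have phase: "discrete_phase S (XiF S) \<i>" "discrete_phase S (XiF S) (- (- \<i>))"
    using discrete_phase_XiF[OF iS iW iO] by simp_all
  interpret q: fully_discrete_family S "XiF S" Sb "XibF Sb" \<i> U Ub V Vb K Kb
    by (intro fully_discrete_family.intro phase discrete_phase_XibF[OF iSb iWb iOb]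
        fully_discrete_family_axioms.intro syl1 syl2) simp
  interpret qb: fully_discrete_family Sb "XibF Sb" S "XiF S" "- \<i>" Ub U Vb V Kb K
    by (intro fully_discrete_family.intro phase discrete_phase_XibF[OF iSb iWb iOb]
        fully_discrete_family_axioms.intro syl1 syl2) simp
  note swap = qsol_swap[of Ub V Kb K] qbsol_swap[of U Vb Kb K] psol_swap[of Ub Vb Kb K]
    pbsol_swap[of U V Kb K]
  show ?thesis
    using q.fully_discrete_q_p_equations[OF reg] qb.fully_discrete_q_p_equations[of x t]
      reg regular_swap[of Kb K]
    unfolding NLS_full_at_def swap by (simp add: cscale_minus_scalar)
qed

theorem proposition5p1:
  fixes U :: "complex^'n2::finite^'m1::finite" and Ub :: "complex^'n1::finite^'m2::finite"
    and V :: "complex^'m1^'n1" and Vb :: "complex^'m2^'n2"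
    and S :: "complex^'n1^'n1" and Sb :: "complex^'n2^'n2"
    and K :: "complex^'n2^'n1" and Kb :: "complex^'n1^'n2"
  shows
    \<comment> \<open>(i) continuous case\<close>
    "(S ** K + K ** Sb = V ** U \<and> Sb ** Kb + Kb ** S = Vb ** Ub \<longrightarrow>
      (\<forall>(x::real) (t::real). regular K Kb (XiC S x t) (XibC Sb x t) \<longrightarrow>
        NLS_cont_at
          (\<lambda>x t. qsol U Vb K Kb (XiC S x t) (XibC Sb x t))
          (\<lambda>x t. qbsol Ub V K Kb (XiC S x t) (XibC Sb x t))
          (\<lambda>x t. psol U V K Kb (XiC S x t) (XibC Sb x t))
          (\<lambda>x t. pbsol Ub Vb K Kb (XiC S x t) (XibC Sb x t)) x t))
    \<and>
    \<comment> \<open>(ii) semi-discrete case\<close>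
    (invertible S \<and> invertible Sb \<and>
     matrix_inv S ** K - K ** Sb = V ** U \<and> matrix_inv Sb ** Kb - Kb ** S = Vb ** Ub \<longrightarrow>
      (\<forall>(x::int) (t::real).
        regular K Kb (XiS S (x - 1) t) (XibS Sb (x - 1) t) \<and>
        regular K Kb (XiS S x t) (XibS Sb x t) \<and>
        regular K Kb (XiS S (x + 1) t) (XibS Sb (x + 1) t) \<longrightarrow>
        NLS_semi_at
          (\<lambda>x t. qsol U Vb K Kb (XiS S x t) (XibS Sb x t))
          (\<lambda>x t. qbsol Ub V K Kb (XiS S x t) (XibS Sb x t))
          (\<lambda>x t. psol U V K Kb (XiS S x t) (XibS Sb x t))
          (\<lambda>x t. pbsol Ub Vb K Kb (XiS S x t) (XibS Sb x t)) x t))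
    \<and>
    \<comment> \<open>(iii) fully discrete case\<close>
    (invertible S \<and> invertible Sb \<and>
     invertible (mat 1 - cscale \<i> (mat 1 - S)) \<and> invertible (mat 1 + cscale \<i> (mat 1 - Sb)) \<and>
     invertible (Omega S) \<and> invertible (Omegabar Sb) \<and>
     matrix_inv S ** K - K ** Sb = V ** U \<and> matrix_inv Sb ** Kb - Kb ** S = Vb ** Ub \<longrightarrow>
      (\<forall>(x::int) (t::int).
        regular K Kb (XiF S (x - 1) t) (XibF Sb (x - 1) t) \<and>
        regular K Kb (XiF S x t) (XibF Sb x t) \<and>
        regular K Kb (XiF S (x + 1) t) (XibF Sb (x + 1) t) \<and>
        regular K Kb (XiF S x (t + 1)) (XibF Sb x (t + 1)) \<and>
        regular K Kb (XiF S (x + 1) (t + 1)) (XibF Sb (x + 1) (t + 1)) \<longrightarrow>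
        NLS_full_at
          (\<lambda>x t. qsol U Vb K Kb (XiF S x t) (XibF Sb x t))
          (\<lambda>x t. qbsol Ub V K Kb (XiF S x t) (XibF Sb x t))
          (\<lambda>x t. psol U V K Kb (XiF S x t) (XibF Sb x t))
          (\<lambda>x t. pbsol Ub Vb K Kb (XiF S x t) (XibF Sb x t)) x t))"
  by (intro conjI impI allI; elim conjE;
      rule continuous_NLS_solution semidiscrete_NLS_solution fully_discrete_NLS_solution; assumption)

end
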